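(* Let $\mu$ be a probability measure on $\mathbb{C}$ with compact support, and let $X_1, X_2, \ldots$ be iid random variables with distribution $\mu$. For each $n \ge 1$ let $\xi_1^{(n)}, \ldots, \xi_{k_n}^{(n)}$ be deterministic complex numbers, where $k_n \le K$ for some constant $K$ independent of $n$, and assume $\max\{|\xi_1^{(n)}|, \ldots, |\xi_{k_n}^{(n)}|\} \le B$ for some constant $B$ independent of $n$. Fix $\varepsilon > 0$ and a nonnegative integer $s$, and suppose that for all sufficiently large $n$: none of $\xi_1^{(n)}, \ldots, \xi_{k_n}^{(n)}$ lies in $N_\mu(3\varepsilon)\setminus N_\mu(\varepsilon)$, the $s$ values $\xi_1^{(n)}, \ldots, \xi_s^{(n)}$ lie outside $N_\mu(3\varepsilon)$, and the remaining values $\xi_{s+1}^{(n)},\ldots,\xi_{k_n}^{(n)}$ lie in $N_\mu(\varepsilon)$. Then, almost surely, for all sufficiently large $n$, the polynomial \[ p_n(z) := \prod_{j=1}^{n-k_n} (z - X_j) \prod_{l=1}^{k_n} (z - \xi_l^{(n)}) \] has exactly $s$ critical points (counted with multiplicity) outside $N_\mu(2\varepsilon)$, and these can be labeled $w_1(p_n), \ldots, w_s(p_n)$ so that $\max_{1 \le l \le s}|w_l(p_n) - \xi_l^{(n)}| \to 0$ as $n\to\infty$.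
   Context: For a probability measure $\mu$ on $\mathbb{C}$, $m_\mu(z) := \int_{\mathbb{C}} \frac{d\mu(x)}{z-x}$ for $z \notin \operatorname{supp}(\mu)$; $M_\mu := \{ z \in \mathbb{C}\setminus \operatorname{supp}(\mu) : m_\mu(z) = 0\}$; and $N_\mu(\varepsilon) := \{ z \in \mathbb{C} : \operatorname{dist}(z, \operatorname{supp}(\mu) \cup M_\mu) < \varepsilon\}$. A critical point of a polynomial is a zero of its derivative. *)

theory Defs
  imports "HOL-Probability.Probability" "HOL-Computational_Algebra.Polynomial"
begin

definition msupp :: "complex measure \<Rightarrow> complex set" where
  "msupp \<mu> = {x. \<forall>r>0. emeasure \<mu> (ball x r) > 0}"

definition cauchy_transform :: "complex measure \<Rightarrow> complex \<Rightarrow> complex" where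
  "cauchy_transform \<mu> z = integral\<^sup>L \<mu> (\<lambda>x. 1 / (z - x))"

definition Mzeros :: "complex measure \<Rightarrow> complex set" where
  "Mzeros \<mu> = {z. z \<notin> msupp \<mu> \<and> cauchy_transform \<mu> z = 0}"

definition Nbhd :: "complex measure \<Rightarrow> real \<Rightarrow> complex set" where
  "Nbhd \<mu> \<epsilon> = {z. infdist z (msupp \<mu> \<union> Mzeros \<mu>) < \<epsilon>}"

definition crit_mult :: "complex poly \<Rightarrow> complex \<Rightarrow> nat" where
  "crit_mult p z = order z (pderiv p)"

end

theory Submission
  imports Defs "HOL-Complex_Analysis.Complex_Analysis"
begin

text \<open>
  Split \<open>p\<^sub>n = E\<^sub>n C\<^sub>n\<close>, where \<open>C\<^sub>n\<close> has the outlying roots \<open>\<xi>\<^sub>1, \<dots>, \<xi>\<^sub>s\<close>. Away from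
  \<open>N\<^sub>\<mu>(2\<epsilon>)\<close> the logarithmic derivative \<open>E\<^sub>n'/E\<^sub>n\<close> consists of the \<open>n - k\<^sub>n\<close> terms \<open>1/(z - X\<^sub>j)\<close>, whose
  mean tends to \<open>m\<^sub>\<mu>(z)\<close> uniformly on compacta (strong law of large numbers at countably many points,
  plus equicontinuity), and of at most \<open>K\<close> bounded terms. As \<open>m\<^sub>\<mu>\<close> has no zeros on the compact set
  \<open>{2\<epsilon> \<le> dist(z, supp \<mu> \<union> M\<^sub>\<mu>), |z| \<le> R}\<close>, we get \<open>|E\<^sub>n'| \<ge> c n |E\<^sub>n|\<close> there, while \<open>|C\<^sub>n'| \<le> (s/r) |C\<^sub>n|\<close>
  at distance \<open>r\<close> from all outliers. Given a target accuracy \<open>\<rho>\<close>, group the outliers into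
  clusters at a scale \<open>r \<in> [\<rho> / 4^(s^2 + 1), \<rho> / 4]\<close> (pigeonhole) for which distinct clusters are \<open>4r\<close> apart. On the circles of radius \<open>2r\<close>
  around the clusters, Rouch\'e's theorem compares \<open>p\<^sub>n' = E\<^sub>n' C\<^sub>n + E\<^sub>n C\<^sub>n'\<close> with \<open>E\<^sub>n' C\<^sub>n\<close>: each disc
  contains as many critical points as outliers. Beyond radius \<open>R\<close> there are no critical points,
  since all roots lie in a disc of radius \<open>R/2\<close>. A diagonal argument lets \<open>\<rho> \<rightarrow> 0\<close>.
\<close>

section \<open>Critical points of products of linear factors\<close>

lemma zorder_poly_eq_order:
  fixes p :: "complex poly"
  assumes "p \<noteq> 0"
  shows "zorder (poly p) z = int (order z p)"
proof -
  obtain q where q: "p = [:- z, 1:] ^ order z p * q" and nd: "\<not> [:- z, 1:] dvd q"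
    using order_decomp[OF assms] by blast
  have qz: "poly q z \<noteq> 0" using nd by (simp add: dvd_iff_poly_eq_0)
  show ?thesis
  proof (rule zorder_eqI[where S=UNIV and g="poly q"])
    show "poly q holomorphic_on UNIV" by (auto intro: holomorphic_intros)
    fix w assume "w \<noteq> z"
    show "poly p w = poly q w * (w - z) powi int (order z p)"
      by (subst q) (simp add: power_int_of_nat mult.commute)
  qed (use qz in auto)
qed

lemma order_prod_linear:
  fixes a :: "'i \<Rightarrow> complex"
  assumes "finite I"
  shows "order z (\<Prod>i\<in>I. [:- a i, 1:]) = card {i\<in>I. a i = z}"
  using assms
proof (induction I rule: finite_induct)
  case empty
  then show ?case by (simp add: order_0I)
next
  case (insert j I)
  have nz: "(\<Prod>i\<in>I. [:- a i, 1:]) \<noteq> 0" using insert by auto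
  have "order z (\<Prod>i\<in>insert j I. [:- a i, 1:])
      = order z ([:- a j, 1:] * (\<Prod>i\<in>I. [:- a i, 1:]))"
    using insert by simp
  also have "\<dots> = order z [:- a j, 1:] + order z (\<Prod>i\<in>I. [:- a i, 1:])"
    using nz by (intro order_mult) (metis mult_eq_0_iff pCons_eq_0_iff one_neq_zero)
  also have "order z [:- a j, 1:] = (if a j = z then 1 else 0)"
    using order_power_n_n[of z 1] by (auto intro: order_0I)
  also have "order z (\<Prod>i\<in>I. [:- a i, 1:]) = card {i\<in>I. a i = z}" by (rule insert.IH)
  also have "(if a j = z then 1 else 0) + card {i\<in>I. a i = z} = card {i\<in>insert j I. a i = z}"
  proof -
    have "{i\<in>insert j I. a i = z}
        = (if a j = z then insert j {i\<in>I. a i = z} else {i\<in>I. a i = z})" by auto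
    then show ?thesis using insert by simp
  qed
  finally show ?case .
qed

lemma poly_pderiv_prod_linear:
  fixes a :: "'i \<Rightarrow> complex"
  assumes "finite I" "\<forall>i\<in>I. z \<noteq> a i"
  shows "poly (pderiv (\<Prod>i\<in>I. [:- a i, 1:])) z = poly (\<Prod>i\<in>I. [:- a i, 1:]) z * (\<Sum>i\<in>I. 1 / (z - a i))"
  using assms
proof (induction I rule: finite_induct)
  case empty
  then show ?case by simp
next
  case (insert j I)
  define P where "P = (\<Prod>i\<in>I. [:- a i, 1:])"
  have nz: "z - a j \<noteq> 0" using insert by auto
  have "pderiv [:- a j, 1:] = 1" by (simp add: pderiv_pCons)
  then have "poly (pderiv ([:- a j, 1:] * P)) z = (z - a j) * poly (pderiv P) z + poly P z"
    unfolding pderiv_mult poly_add poly_mult by simp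
  also have "poly (pderiv P) z = poly P z * (\<Sum>i\<in>I. 1 / (z - a i))"
    using insert by (simp add: P_def)
  finally have "poly (pderiv ([:- a j, 1:] * P)) z
      = (z - a j) * (poly P z * (\<Sum>i\<in>I. 1 / (z - a i))) + poly P z" .
  also have "\<dots> = poly ([:- a j, 1:] * P) z * (1 / (z - a j) + (\<Sum>i\<in>I. 1 / (z - a i)))"
    using nz by (simp add: field_simps)
  finally show ?case using insert by (simp add: P_def)
qed

lemma poly_pderiv_mult_logderiv:
  fixes F G :: "complex poly"
  assumes "poly (pderiv F) z = poly F z * a" "poly (pderiv G) z = poly G z * b"
  shows "poly (pderiv (F * G)) z = poly (F * G) z * (a + b)"
  using assms by (simp add: pderiv_mult algebra_simps)

lemma norm_sum_inverse_diff_le: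
  fixes a :: "'i \<Rightarrow> 'a::real_normed_field"
  assumes "r > 0" "\<forall>i\<in>I. r \<le> norm (z - a i)"
  shows "norm (\<Sum>i\<in>I. 1 / (z - a i)) \<le> real (card I) / r"
proof -
  have "norm (\<Sum>i\<in>I. 1 / (z - a i)) \<le> (\<Sum>i\<in>I. norm (1 / (z - a i)))" by (rule norm_sum)
  also have "\<dots> \<le> (\<Sum>i\<in>I. 1 / r)"
    using assms by (intro sum_mono) (simp add: norm_divide frac_le)
  finally show ?thesis by simp
qed

lemma add_neq_0_if_norm_less:
  fixes a b :: "'a::real_normed_vector"
  assumes "norm b < norm a"
  shows "a + b \<noteq> 0"
proof
  assume "a + b = 0"
  then have "b = - a" by (simp add: add_eq_0_iff)
  then show False using assms by simp
qed

lemma Re_mult_inverse_diff_pos: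
  fixes a z :: complex
  assumes "norm a \<le> \<rho>" "norm z > 2 * \<rho>"
  shows "Re (z * (1 / (z - a))) > 0"
proof -
  have "\<rho> \<ge> 0" using assms(1) norm_ge_zero order.trans by blast
  then have zpos: "z \<noteq> 0" using assms(2) by auto
  define w where "w = a / z"
  have nw: "norm w < 1/2"
    using assms zpos by (auto simp: w_def norm_divide field_simps)
  have eq: "z * (1 / (z - a)) = 1 / (1 - w)"
    using zpos by (auto simp: w_def field_simps)
  have "Re (1 - w) > 0" using nw abs_Re_le_cmod[of w] by auto
  then have "(1 - Re w) / ((1 - Re w) * (1 - Re w) + Im w * Im w) > 0"
    by (intro divide_pos_pos add_pos_nonneg) auto
  then show ?thesis unfolding eq by (simp add: Re_divide cmod_power2 power2_eq_square)
qed

text \<open>For \<open>|z| > 2\<rho>\<close> every term \<open>z/(z - a\<^sub>i)\<close> of \<open>z p'(z)/p(z)\<close> has positive real part.\<close>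
lemma poly_pderiv_prod_linear_nonzero_far:
  fixes a :: "'i \<Rightarrow> complex"
  assumes "finite I" "I \<noteq> {}" "\<forall>i\<in>I. norm (a i) \<le> \<rho>" "norm z > 2 * \<rho>"
  shows "poly (pderiv (\<Prod>i\<in>I. [:- a i, 1:])) z \<noteq> 0"
proof -
  have ne: "\<forall>i\<in>I. z \<noteq> a i" using assms(3,4) Re_mult_inverse_diff_pos by fastforce
  have "Re (z * (\<Sum>i\<in>I. 1 / (z - a i))) > 0"
    unfolding sum_distrib_left Re_sum using assms Re_mult_inverse_diff_pos by (intro sum_pos) auto
  then have "(\<Sum>i\<in>I. 1 / (z - a i)) \<noteq> 0" by (intro notI) simp
  then show ?thesis
    using ne assms(1) by (simp add: poly_pderiv_prod_linear poly_prod)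
qed

lemma sum_winding_zorder_poly_circlepath:
  fixes q :: "complex poly"
  assumes "q \<noteq> 0" "R > 0" "\<And>z. poly q z = 0 \<Longrightarrow> norm (z - c) \<noteq> R"
  shows "(\<Sum>p\<in>{p. poly q p = 0}. winding_number (circlepath c R) p * zorder (poly q) p)
       = of_nat (\<Sum>z\<in>{z\<in>ball c R. poly q z = 0}. order z q)"
proof -
  have fin: "finite {p. poly q p = 0}" using poly_roots_finite[OF assms(1)] .
  have wn: "winding_number (circlepath c R) p = (if p \<in> ball c R then 1 else 0)"
    if "poly q p = 0" for p
  proof (cases "p \<in> ball c R")
    case True
    then show ?thesis by (simp add: winding_number_circlepath dist_norm norm_minus_commute)
  next
    case False
    then have "p \<notin> cball c R" using assms(3)[OF that] by (auto simp: dist_norm norm_minus_commute)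
    then show ?thesis using False assms(2)
      by (intro trans[OF winding_number_zero_outside[OF _ convex_cball]] if_not_P[symmetric])
         (auto simp: sphere_def)
  qed
  have "(\<Sum>p\<in>{p. poly q p = 0}. winding_number (circlepath c R) p * zorder (poly q) p)
      = (\<Sum>p\<in>{p. poly q p = 0}. if p \<in> ball c R then of_nat (order p q) else 0)"
    using wn by (intro sum.cong) (auto simp: zorder_poly_eq_order[OF assms(1)])
  also have "\<dots> = (\<Sum>p\<in>{p. poly q p = 0} \<inter> ball c R. of_nat (order p q))"
    by (subst sum.inter_restrict[OF fin]) (auto intro: sum.cong)
  also have "{p. poly q p = 0} \<inter> ball c R = {z\<in>ball c R. poly q z = 0}" by auto
  finally show ?thesis by (simp only: of_nat_sum)
qed

lemma Rouche_poly_ball: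
  fixes f g :: "complex poly"
  assumes "f \<noteq> 0" "f + g \<noteq> 0" "R > 0"
    and less: "\<And>z. norm (z - c) = R \<Longrightarrow> norm (poly g z) < norm (poly f z)"
  shows "(\<Sum>z\<in>{z\<in>ball c R. poly (f + g) z = 0}. order z (f + g))
       = (\<Sum>z\<in>{z\<in>ball c R. poly f z = 0}. order z f)"
proof -
  have off1: "norm (z - c) \<noteq> R" if "poly (f + g) z = 0" for z
    using less[of z] that by (auto simp: add_eq_0_iff)
  have off2: "norm (z - c) \<noteq> R" if "poly f z = 0" for z
    using less[of z] that by auto
  have "(\<Sum>p\<in>{p\<in>UNIV. poly f p + poly g p = 0}. winding_number (circlepath c R) p * zorder (\<lambda>p. poly f p + poly g p) p)
      = (\<Sum>p\<in>{p\<in>UNIV. poly f p = 0}. winding_number (circlepath c R) p * zorder (poly f) p)"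
  proof (rule Rouche_theorem)
    show "finite {p \<in> UNIV. poly f p + poly g p = 0}"
      using poly_roots_finite[OF assms(2)] by simp
    show "finite {p \<in> UNIV. poly f p = 0}" using poly_roots_finite[OF assms(1)] by simp
    show "\<forall>z\<in>path_image (circlepath c R). cmod (poly g z) < cmod (poly f z)"
      using less assms(3) by (auto simp: dist_norm norm_minus_commute)
  qed (auto simp: assms(3) intro: holomorphic_intros)
  moreover have "(\<lambda>p. poly f p + poly g p) = poly (f + g)" by auto
  ultimately have "(of_nat (\<Sum>z\<in>{z\<in>ball c R. poly (f + g) z = 0}. order z (f + g)) :: complex)
      = of_nat (\<Sum>z\<in>{z\<in>ball c R. poly f z = 0}. order z f)"
    using sum_winding_zorder_poly_circlepath[OF assms(2,3) off1]
      sum_winding_zorder_poly_circlepath[OF assms(1,3) off2] by simp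
  then show ?thesis by (simp only: of_nat_eq_iff)
qed

section \<open>Clusters, enumerations and diagonal sequences\<close>

text \<open>Pigeonhole: the windows \<open>[r, 4r)\<close> of the \<open>s\<^sup>2 + 1\<close> scales \<open>r = \<rho> / 4^(t + 1)\<close> are disjoint,
  and a scale fails only if one of the at most \<open>s\<^sup>2\<close> pairwise distances lies in its window.\<close>
lemma exists_separating_scale:
  fixes \<xi> :: "'i \<Rightarrow> 'a::metric_space" and \<rho> :: real
  assumes "finite I" "card I \<le> s" "\<rho> > 0"
  shows "\<exists>r. \<rho> / 4 ^ (s * s + 1) \<le> r \<and> r \<le> \<rho> / 4 \<and>
             (\<forall>i\<in>I. \<forall>j\<in>I. dist (\<xi> i) (\<xi> j) < r \<or> dist (\<xi> i) (\<xi> j) \<ge> 4 * r)"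
proof (rule ccontr)
  assume H: "\<not> ?thesis"
  define r where "r t = \<rho> / 4 ^ (t+1)" for t :: nat
  have bad: "\<exists>p\<in>I\<times>I. r t \<le> dist (\<xi> (fst p)) (\<xi> (snd p)) \<and> dist (\<xi> (fst p)) (\<xi> (snd p)) < 4 * r t"
    if "t \<le> s * s" for t
  proof -
    have p1: "(4::real)^(t+1) \<le> 4^(s * s + 1)" using that by (intro power_increasing) auto
    have p2: "(4::real)^1 \<le> 4^(t+1)" by (intro power_increasing) auto
    have "\<rho> / 4 ^ (s * s + 1) \<le> r t"
      unfolding r_def using assms(3) p1 by (intro divide_left_mono) auto
    moreover have "r t \<le> \<rho> / 4 ^ 1" unfolding r_def using assms(3) p2
      by (intro divide_left_mono) auto
    then have "r t \<le> \<rho> / 4" by simp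
    ultimately have "\<not> (\<forall>i\<in>I. \<forall>j\<in>I. dist (\<xi> i) (\<xi> j) < r t \<or> dist (\<xi> i) (\<xi> j) \<ge> 4 * r t)"
      using H by blast
    then obtain i j where "i \<in> I" "j \<in> I" "\<not> (dist (\<xi> i) (\<xi> j) < r t \<or> dist (\<xi> i) (\<xi> j) \<ge> 4 * r t)"
      by blast
    then show ?thesis by (intro bexI[of _ "(i,j)"]) auto
  qed
  then have "\<forall>t. \<exists>p. t \<le> s * s \<longrightarrow> p \<in> I\<times>I \<and> r t \<le> dist (\<xi> (fst p)) (\<xi> (snd p))
        \<and> dist (\<xi> (fst p)) (\<xi> (snd p)) < 4 * r t" by blast
  then have "\<exists>f. \<forall>t. t \<le> s * s \<longrightarrow> f t \<in> I\<times>I \<and> r t \<le> dist (\<xi> (fst (f t))) (\<xi> (snd (f t)))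
        \<and> dist (\<xi> (fst (f t))) (\<xi> (snd (f t))) < 4 * r t" by (rule choice)
  then obtain f where f: "\<And>t. t \<le> s * s \<Longrightarrow> f t \<in> I\<times>I \<and> r t \<le> dist (\<xi> (fst (f t))) (\<xi> (snd (f t)))
        \<and> dist (\<xi> (fst (f t))) (\<xi> (snd (f t))) < 4 * r t"
    by blast
  have r4: "4 * r t' \<le> r t" if "t < t'" for t t'
  proof -
    have "4 * r t' = \<rho> / 4 ^ t'" unfolding r_def by (simp add: field_simps)
    also have "\<dots> \<le> \<rho> / 4 ^ (t+1)"
    proof -
      have p: "(4::real)^(t+1) \<le> 4^t'" using that by (intro power_increasing) auto
      show ?thesis using assms(3) p by (intro divide_left_mono) auto
    qed
    finally show ?thesis unfolding r_def .
  qed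
  have inj: "inj_on f {..s * s}"
  proof (rule inj_onI)
    fix t t' assume t: "t \<in> {..s * s}" "t' \<in> {..s * s}" and eq: "f t = f t'"
    show "t = t'"
    proof (rule ccontr)
      assume "t \<noteq> t'"
      then consider "t < t'" | "t' < t" by linarith
      then show False
      proof cases
        case 1 then show ?thesis using f[of t] f[of t'] t eq r4[OF 1] by auto
      next
        case 2 then show ?thesis using f[of t] f[of t'] t eq r4[OF 2] by auto
      qed
    qed
  qed
  have "f ` {..s * s} \<subseteq> I \<times> I"
  proof (rule image_subsetI)
    fix t assume "t \<in> {..s * s}" then show "f t \<in> I \<times> I" using f[of t] by simp
  qed
  then have "card (f ` {..s * s}) \<le> card (I \<times> I)" using assms(1) by (intro card_mono) auto
  also have "\<dots> = card I * card I" by (simp add: card_cartesian_product)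
  also have "\<dots> \<le> s * s" using assms(2) by (intro mult_mono) auto
  finally show False using card_image[OF inj] by simp
qed

lemma exists_label_preserving_enumeration:
  fixes a :: "'i \<Rightarrow> 'k" and b :: "'z \<Rightarrow> 'k"
  assumes "finite I" "\<And>k. card {i\<in>I. a i = k} = size (filter_mset (\<lambda>z. b z = k) Z)"
  shows "\<exists>w. image_mset w (mset_set I) = Z \<and> (\<forall>i\<in>I. b (w i) = a i)"
  using assms
proof (induction I arbitrary: Z rule: finite_induct)
  case empty
  have "Z = {#}"
  proof (rule ccontr)
    assume "Z \<noteq> {#}"
    then obtain z where z: "z \<in># Z" by auto
    have "size (filter_mset (\<lambda>x. b x = b z) Z) = 0" using empty(1)[of "b z"] by simp
    then show False using z by (auto simp: filter_mset_eq_conv size_eq_0_iff_empty)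
  qed
  then show ?case by simp
next
  case (insert j I)
  have "size (filter_mset (\<lambda>z. b z = a j) Z) = card {i\<in>insert j I. a i = a j}"
    using insert(4) by simp
  also have "\<dots> > 0" using insert(1) by (auto simp: card_gt_0_iff)
  finally have "size (filter_mset (\<lambda>z. b z = a j) Z) > 0" .
  then have "filter_mset (\<lambda>z. b z = a j) Z \<noteq> {#}" by (intro notI) simp
  then obtain z where "z \<in># filter_mset (\<lambda>z. b z = a j) Z" by blast
  then have z: "z \<in># Z" "b z = a j" by auto
  define Z' where "Z' = Z - {#z#}"
  have Zeq: "Z = add_mset z Z'" using z(1) by (simp add: Z'_def)
  have cnt: "card {i\<in>I. a i = k} = size (filter_mset (\<lambda>z. b z = k) Z')" for k
  proof -
    have c1: "card {i\<in>insert j I. a i = k} = (if a j = k then 1 else 0) + card {i\<in>I. a i = k}"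
    proof (cases "a j = k")
      case True
      then have "{i\<in>insert j I. a i = k} = insert j {i\<in>I. a i = k}" by auto
      then show ?thesis using True insert(1,2) by simp
    next
      case False
      then have "{i\<in>insert j I. a i = k} = {i\<in>I. a i = k}" by auto
      then show ?thesis using False by simp
    qed
    have c2: "size (filter_mset (\<lambda>z. b z = k) Z) = (if a j = k then 1 else 0) + size (filter_mset (\<lambda>z. b z = k) Z')"
      unfolding Zeq using z(2) by simp
    show ?thesis using insert(4)[of k] c1 c2 by simp
  qed
  obtain w where w: "image_mset w (mset_set I) = Z'" "\<forall>i\<in>I. b (w i) = a i"
    using insert(3)[OF cnt] by blast
  define w' where "w' = w(j := z)"
  have "image_mset w' (mset_set (insert j I)) = add_mset z (image_mset w' (mset_set I))"
    using insert(1,2) by (simp add: w'_def)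
  also have "image_mset w' (mset_set I) = image_mset w (mset_set I)"
    using insert(2) by (intro image_mset_cong) (auto simp: w'_def insert(1))
  finally have "image_mset w' (mset_set (insert j I)) = Z" using w(1) Zeq by simp
  moreover have "\<forall>i\<in>insert j I. b (w' i) = a i" using w(2) z(2) insert(2) by (auto simp: w'_def)
  ultimately show ?case by blast
qed

lemma exists_label_preserving_enumeration_weighted:
  fixes a :: "'i \<Rightarrow> 'k" and b :: "'z \<Rightarrow> 'k" and m :: "'z \<Rightarrow> nat"
  assumes "finite I" "finite Z" "\<And>k. card {i\<in>I. a i = k} = (\<Sum>z\<in>{z\<in>Z. b z = k}. m z)"
  shows "\<exists>w. (\<forall>z. count (image_mset w (mset_set I)) z = (if z \<in> Z then m z else 0))
             \<and> (\<forall>i\<in>I. w i \<in> Z \<and> b (w i) = a i)"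
proof -
  define M where "M = (\<Sum>z\<in>Z. replicate_mset (m z) z)"
  have count_M: "count M x = (if x \<in> Z then m x else 0)" for x
    using assms(2) by (simp add: M_def count_sum sum.delta)
  have filter_replicate: "filter_mset Q (replicate_mset n x) = (if Q x then replicate_mset n x else {#})"
    for Q and n :: nat and x :: 'z
    by (induction n) auto
  have "size (filter_mset Q M) = (\<Sum>z\<in>{z\<in>Z. Q z}. m z)" for Q
    unfolding M_def using assms(2)
  proof (induction Z rule: finite_induct)
    case (insert x F)
    have "{z\<in>insert x F. Q z} = (if Q x then insert x {z\<in>F. Q z} else {z\<in>F. Q z})" by auto
    then show ?case using insert by (simp add: filter_replicate)
  qed simp
  then obtain w where w: "image_mset w (mset_set I) = M" "\<forall>i\<in>I. b (w i) = a i"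
    using exists_label_preserving_enumeration[OF assms(1), where b=b and Z=M] assms(3) by metis
  have "w i \<in> Z" if "i \<in> I" for i
  proof -
    have "w i \<in># M" using that assms(1) w(1)[symmetric] by auto
    then show ?thesis using count_M[of "w i"] by (metis count_eq_zero_iff)
  qed
  then show ?thesis using w count_M by metis
qed

lemma exists_enumeration_near_centres:
  fixes cen :: "'i \<Rightarrow> 'a::metric_space" and m :: "'a \<Rightarrow> nat"
  assumes "finite I" "finite Z"
    and near: "\<And>z. z \<in> Z \<Longrightarrow> \<exists>l\<in>I. dist z (cen l) < \<rho>"
    and separated: "\<And>l l'. l \<in> I \<Longrightarrow> l' \<in> I \<Longrightarrow> cen l \<noteq> cen l' \<Longrightarrow> 2 * \<rho> \<le> dist (cen l) (cen l')"
    and counts: "\<And>l. l \<in> I \<Longrightarrow> (\<Sum>z\<in>{z\<in>Z. dist z (cen l) < \<rho>}. m z) = card {i\<in>I. cen i = cen l}"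
  shows "\<exists>w. (\<forall>z. count (image_mset w (mset_set I)) z = (if z \<in> Z then m z else 0))
             \<and> (\<forall>i\<in>I. w i \<in> Z \<and> dist (w i) (cen i) < \<rho>)"
proof -
  have unique: "cen l = cen l'"
    if "l \<in> I" "l' \<in> I" "dist z (cen l) < \<rho>" "dist z (cen l') < \<rho>" for z l l'
  proof (rule ccontr)
    assume "cen l \<noteq> cen l'"
    then have "2 * \<rho> \<le> dist (cen l) (cen l')" using separated that(1,2) by blast
    then show False using that(3,4) dist_triangle3[of "cen l" "cen l'" z] by linarith
  qed
  define b where "b z = (SOME c. c \<in> cen ` I \<and> dist z c < \<rho>)" for z
  have b: "b z \<in> cen ` I \<and> dist z (b z) < \<rho>" if z: "z \<in> Z" for z
  proof -
    obtain l where "l \<in> I" "dist z (cen l) < \<rho>" using near[OF z] by blast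
    then have "cen l \<in> cen ` I \<and> dist z (cen l) < \<rho>" by simp
    then show ?thesis unfolding b_def by (rule someI)
  qed
  have "card {i\<in>I. cen i = k} = (\<Sum>z\<in>{z\<in>Z. b z = k}. m z)" for k
  proof (cases "k \<in> cen ` I")
    case True
    then obtain l where l: "l \<in> I" "k = cen l" by auto
    have "{z\<in>Z. b z = k} = {z\<in>Z. dist z (cen l) < \<rho>}"
    proof (intro set_eqI iffI)
      fix z assume z: "z \<in> {z\<in>Z. dist z (cen l) < \<rho>}"
      then obtain l' where "l' \<in> I" "b z = cen l'" "dist z (cen l') < \<rho>" using b[of z] by auto
      then show "z \<in> {z\<in>Z. b z = k}" using z unique[OF _ l(1)] l(2) by auto
    next
      fix z assume "z \<in> {z\<in>Z. b z = k}"
      then show "z \<in> {z\<in>Z. dist z (cen l) < \<rho>}" using b[of z] l(2) by simp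
    qed
    then show ?thesis using counts[OF l(1)] l(2) by simp
  next
    case False
    then have "{i\<in>I. cen i = k} = {}" by force
    moreover have "{z\<in>Z. b z = k} = {}" using b False by force
    ultimately show ?thesis by (simp only: card.empty sum.empty)
  qed
  then obtain w where "\<forall>z. count (image_mset w (mset_set I)) z = (if z \<in> Z then m z else 0)"
    and "\<forall>i\<in>I. w i \<in> Z \<and> b (w i) = cen i"
    using exists_label_preserving_enumeration_weighted[OF assms(1,2)] by blast
  then show ?thesis using b by metis
qed

text \<open>Under the gap condition, \<open>dist (\<xi> i) (\<xi> j) < r\<close> is an equivalence relation on \<open>I\<close>; the centres
  are least representatives of its classes.\<close>
lemma exists_cluster_centres:
  fixes \<xi> :: "'i::wellorder \<Rightarrow> 'a::metric_space"
  assumes "finite I" "r > 0"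
    and gap: "\<forall>i\<in>I. \<forall>j\<in>I. dist (\<xi> i) (\<xi> j) < r \<or> dist (\<xi> i) (\<xi> j) \<ge> 4 * r"
  shows "\<exists>cen. (\<forall>l\<in>I. cen l \<in> \<xi> ` I \<and> dist (cen l) (\<xi> l) < r)
     \<and> (\<forall>l\<in>I. \<forall>l'\<in>I. cen l \<noteq> cen l' \<longrightarrow> dist (cen l) (cen l') \<ge> 4 * r)
     \<and> (\<forall>i\<in>I. \<forall>l\<in>I. dist (\<xi> i) (cen l) < 2 * r \<longrightarrow> cen i = cen l)"
proof -
  have trans: "dist (\<xi> a) (\<xi> c) < r" if "a \<in> I" "b \<in> I" "c \<in> I" "dist (\<xi> a) (\<xi> b) < r" "dist (\<xi> b) (\<xi> c) < r" for a b c
  proof -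
    have "dist (\<xi> a) (\<xi> c) \<le> dist (\<xi> a) (\<xi> b) + dist (\<xi> b) (\<xi> c)" by (rule dist_triangle)
    then have "dist (\<xi> a) (\<xi> c) < 4 * r" using that assms(2) by linarith
    then show ?thesis using gap that(1,3) by force
  qed
  define rep where "rep l = (LEAST i. i \<in> I \<and> dist (\<xi> i) (\<xi> l) < r)" for l
  have rep1: "rep l \<in> I \<and> dist (\<xi> (rep l)) (\<xi> l) < r" if "l \<in> I" for l
  proof -
    have "l \<in> I \<and> dist (\<xi> l) (\<xi> l) < r" using that assms(2) by simp
    then show ?thesis unfolding rep_def by (rule LeastI)
  qed
  have rep2: "rep l = rep l'" if "l \<in> I" "l' \<in> I" "dist (\<xi> l) (\<xi> l') < r" for l l'
  proof -
    have "(\<lambda>i. i \<in> I \<and> dist (\<xi> i) (\<xi> l) < r) = (\<lambda>i. i \<in> I \<and> dist (\<xi> i) (\<xi> l') < r)"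
    proof (intro ext iffI)
      fix i assume "i \<in> I \<and> dist (\<xi> i) (\<xi> l) < r"
      then show "i \<in> I \<and> dist (\<xi> i) (\<xi> l') < r" using trans[of i l l'] that by auto
    next
      fix i assume "i \<in> I \<and> dist (\<xi> i) (\<xi> l') < r"
      moreover have "dist (\<xi> l') (\<xi> l) < r" using that(3) by (simp add: dist_commute)
      ultimately show "i \<in> I \<and> dist (\<xi> i) (\<xi> l) < r" using trans[of i l' l] that by auto
    qed
    then show ?thesis unfolding rep_def by simp
  qed
  define cen where "cen l = \<xi> (rep l)" for l
  have c1: "\<forall>l\<in>I. cen l \<in> \<xi> ` I \<and> dist (cen l) (\<xi> l) < r"
    using rep1 unfolding cen_def by auto
  have c3: "cen i = cen l" if "i \<in> I" "l \<in> I" "dist (\<xi> i) (cen l) < 2 * r" for i l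
  proof -
    have rl: "rep l \<in> I" "dist (\<xi> (rep l)) (\<xi> l) < r" using rep1[OF that(2)] by auto
    have "dist (\<xi> i) (\<xi> (rep l)) < 4 * r" using that(3) assms(2) unfolding cen_def by linarith
    then have "dist (\<xi> i) (\<xi> (rep l)) < r" using gap that(1) rl(1) by force
    then have "dist (\<xi> i) (\<xi> l) < r" using trans[of i "rep l" l] that rl by auto
    then show ?thesis unfolding cen_def using rep2 that(1,2) by metis
  qed
  have c2: "dist (cen l) (cen l') \<ge> 4 * r" if "l \<in> I" "l' \<in> I" "cen l \<noteq> cen l'" for l l'
  proof (rule ccontr)
    assume "\<not> ?thesis"
    then have "dist (cen l) (cen l') < 4 * r" by simp
    moreover have "rep l \<in> I" "rep l' \<in> I" using rep1 that by auto
    ultimately have "dist (cen l) (cen l') < r" using gap unfolding cen_def by force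
    then have "dist (\<xi> (rep l)) (\<xi> l') < r"
      using trans[of "rep l" "rep l'" l'] rep1[OF that(1)] rep1[OF that(2)] that by (auto simp: cen_def)
    moreover have "dist (\<xi> l) (\<xi> (rep l)) < r" using rep1[OF that(1)] by (simp add: dist_commute)
    ultimately have "dist (\<xi> l) (\<xi> l') < r" using trans[of l "rep l" l'] rep1[OF that(1)] that by auto
    then have "cen l = cen l'" unfolding cen_def using rep2 that(1,2) by metis
    then show False using that(3) by simp
  qed
  show ?thesis using c1 c2 c3 by blast
qed

lemma dist_ge_off_cluster_discs:
  fixes cen \<xi> :: "'i \<Rightarrow> 'a::metric_space"
  assumes "\<forall>l\<in>I. dist (cen l) (\<xi> l) < r" "\<forall>l\<in>I. 2 * r \<le> dist z (cen l)" "i \<in> I"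
  shows "r \<le> dist z (\<xi> i)"
  using assms dist_triangle[of z "cen i" "\<xi> i"] by (force simp: dist_commute)

lemma dist_ge_on_cluster_circle:
  fixes cen \<xi> :: "'i \<Rightarrow> 'a::metric_space"
  assumes "\<forall>l\<in>I. dist (cen l) (\<xi> l) < r"
    and separated: "\<forall>l\<in>I. \<forall>l'\<in>I. cen l \<noteq> cen l' \<longrightarrow> dist (cen l) (cen l') \<ge> 4 * r"
    and "l \<in> I" "dist z (cen l) = 2 * r" "i \<in> I"
  shows "r \<le> dist z (\<xi> i)"
proof (rule dist_ge_off_cluster_discs[OF assms(1) ballI \<open>i \<in> I\<close>])
  fix l' assume "l' \<in> I"
  show "2 * r \<le> dist z (cen l')"
  proof (cases "cen l' = cen l")
    case False
    then have "4 * r \<le> dist (cen l) (cen l')" using separated \<open>l \<in> I\<close> \<open>l' \<in> I\<close> by metis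
    then show ?thesis using assms(4) dist_triangle[of "cen l" "cen l'" z] by (simp add: dist_commute)
  qed (use assms(4) in simp)
qed

lemma diagonal_eventually_choice:
  fixes G :: "nat \<Rightarrow> 'a \<Rightarrow> bool" and E :: "nat \<Rightarrow> 'a \<Rightarrow> real"
  assumes "\<And>\<delta>. \<delta> > 0 \<Longrightarrow> eventually (\<lambda>n. \<exists>w. G n w \<and> E n w < \<delta>) sequentially"
  shows "\<exists>W. eventually (\<lambda>n. G n (W n)) sequentially \<and> (\<forall>\<delta>>0. eventually (\<lambda>n. E n (W n) < \<delta>) sequentially)"
proof -
  have "\<forall>m. \<exists>N. \<forall>n\<ge>N. \<exists>w. G n w \<and> E n w < 1 / (real m + 1)"
    using assms by (auto simp: eventually_sequentially)
  then obtain N where N: "\<And>m n. n \<ge> N m \<Longrightarrow> \<exists>w. G n w \<and> E n w < 1 / (real m + 1)" by metis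
  \<comment> \<open>at time \<open>n\<close>, use the finest accuracy \<open>1/(m + 1)\<close> whose thresholds \<open>N 0, \<dots>, N m\<close> are all passed\<close>
  define A where "A n = {m. m \<le> n \<and> (\<forall>i\<le>m. N i \<le> n)}" for n
  have memA: "m \<in> A n \<longleftrightarrow> m \<le> n \<and> (\<forall>i\<le>m. N i \<le> n)" for m n by (simp add: A_def)
  have finA: "finite (A n)" for n
  proof (rule finite_subset)
    show "A n \<subseteq> {..n}" using memA by auto
  qed auto
  define W where "W n = (SOME w. G n w \<and> E n w < 1 / (real (Max (A n)) + 1))" for n
  have good: "G n (W n) \<and> E n (W n) < 1 / (real (Max (A n)) + 1)" if "n \<ge> N 0" for n
  proof -
    have "0 \<in> A n" using that by (simp add: memA)
    then have "Max (A n) \<in> A n" using finA by (intro Max_in) auto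
    then have "N (Max (A n)) \<le> n" unfolding memA by simp
    then have "\<exists>w. G n w \<and> E n w < 1 / (real (Max (A n)) + 1)" by (rule N)
    then show ?thesis unfolding W_def by (rule someI_ex)
  qed
  have ev1: "eventually (\<lambda>n. G n (W n)) sequentially"
    unfolding eventually_sequentially using good by blast
  have ev2: "eventually (\<lambda>n. E n (W n) < \<delta>) sequentially" if hd: "\<delta> > 0" for \<delta>
  proof -
    obtain m :: nat where m0: "inverse (real (Suc m)) < \<delta>"
      using reals_Archimedean[OF hd] by blast
    then have m: "1 / (real m + 1) < \<delta>" by (simp add: inverse_eq_divide add.commute)
    define M where "M = max m (max (N 0) (Max (N ` {..m})))"
    show ?thesis unfolding eventually_sequentially
    proof (intro exI allI impI)
      fix n assume n: "M \<le> n"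
      have "N i \<le> n" if "i \<le> m" for i
      proof -
        have "N i \<le> Max (N ` {..m})" using that by (intro Max_ge) auto
        also have "\<dots> \<le> M" unfolding M_def by linarith
        finally show ?thesis using n by linarith
      qed
      moreover have "m \<le> n" using n unfolding M_def by linarith
      ultimately have "m \<in> A n" unfolding memA by blast
      then have "m \<le> Max (A n)" using finA by auto
      then have "1 / (real (Max (A n)) + 1) \<le> 1 / (real m + 1)"
        by (intro divide_left_mono) auto
      moreover have "n \<ge> N 0" using n by (simp add: M_def)
      ultimately show "E n (W n) < \<delta>" using good[of n] m by linarith
    qed
  qed
  show ?thesis using ev1 ev2 by blast
qed

section \<open>Critical points near clusters of roots\<close>

lemma norm_poly_mult_pderiv_prod_linear_less:
  fixes E :: "complex poly" and \<xi> :: "'i \<Rightarrow> complex"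
  assumes "finite I" "r > 0" "real (card I) < L * r" "\<forall>i\<in>I. r \<le> dist z (\<xi> i)"
    and "poly E z \<noteq> 0" "L * norm (poly E z) \<le> norm (poly (pderiv E) z)"
  shows "norm (poly (E * pderiv (\<Prod>i\<in>I. [:- \<xi> i, 1:])) z)
       < norm (poly (pderiv E * (\<Prod>i\<in>I. [:- \<xi> i, 1:])) z)"
proof -
  define C where "C = (\<Prod>i\<in>I. [:- \<xi> i, 1:])"
  have ne: "\<forall>i\<in>I. z \<noteq> \<xi> i" using assms(2,4) by auto
  have Cz: "poly C z \<noteq> 0" unfolding C_def poly_prod using ne assms(1) by auto
  have "norm (\<Sum>i\<in>I. 1 / (z - \<xi> i)) \<le> real (card I) / r"
    using assms(2,4) by (intro norm_sum_inverse_diff_le) (auto simp: dist_norm)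
  also have "\<dots> < L" using assms(2,3) by (simp add: divide_less_eq)
  finally have S: "norm (\<Sum>i\<in>I. 1 / (z - \<xi> i)) < L" .
  have "norm (poly (E * pderiv C) z) = norm (poly E z) * norm (poly C z) * norm (\<Sum>i\<in>I. 1 / (z - \<xi> i))"
    unfolding C_def by (simp add: poly_pderiv_prod_linear[OF assms(1) ne] norm_mult)
  also have "\<dots> < norm (poly E z) * norm (poly C z) * L"
    using S assms(5) Cz by (intro mult_strict_left_mono) auto
  also have "\<dots> = (L * norm (poly E z)) * norm (poly C z)" by simp
  also have "\<dots> \<le> norm (poly (pderiv E) z) * norm (poly C z)"
    using assms(6) by (intro mult_right_mono) auto
  also have "\<dots> = norm (poly (pderiv E * C) z)" by (simp add: norm_mult)
  finally show ?thesis unfolding C_def .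
qed

lemma sum_order_mult_prod_linear:
  fixes Q :: "complex poly" and \<xi> :: "'i \<Rightarrow> complex"
  assumes "finite I" "\<And>z. z \<in> U \<Longrightarrow> poly Q z \<noteq> 0"
  shows "(\<Sum>z\<in>{z\<in>U. poly (Q * (\<Prod>i\<in>I. [:- \<xi> i, 1:])) z = 0}. order z (Q * (\<Prod>i\<in>I. [:- \<xi> i, 1:])))
       = card {i\<in>I. \<xi> i \<in> U}"
proof (cases "U = {}")
  case False
  define C where "C = (\<Prod>i\<in>I. [:- \<xi> i, 1:])"
  define J where "J = {i\<in>I. \<xi> i \<in> U}"
  have "Q \<noteq> 0" using False assms(2) by fastforce
  moreover have "C \<noteq> 0" using assms(1) by (simp add: C_def)
  ultimately have QC: "Q * C \<noteq> 0" by simp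
  have roots: "{z\<in>U. poly (Q * C) z = 0} = \<xi> ` J"
    using assms by (auto simp: C_def J_def poly_prod prod_zero_iff)
  have "order z (Q * C) = card {i\<in>J. \<xi> i = z}" if "z \<in> \<xi> ` J" for z
  proof -
    have "order z (Q * C) = order z Q + order z C" using QC by (rule order_mult)
    also have "order z Q = 0" using that assms(2) by (intro order_0I) (auto simp: J_def)
    also have "order z C = card {i\<in>I. \<xi> i = z}" unfolding C_def by (rule order_prod_linear[OF assms(1)])
    also have "{i\<in>I. \<xi> i = z} = {i\<in>J. \<xi> i = z}" using that by (auto simp: J_def)
    finally show ?thesis by simp
  qed
  then have "(\<Sum>z\<in>{z\<in>U. poly (Q * C) z = 0}. order z (Q * C)) = (\<Sum>z\<in>\<xi> ` J. card {i\<in>J. \<xi> i = z})"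
    unfolding roots by (rule sum.cong[OF refl])
  also have "\<dots> = card J"
    unfolding card_eq_sum using assms(1) by (intro sum.image_gen[symmetric]) (simp add: J_def)
  finally show ?thesis by (simp add: C_def J_def)
qed simp

text \<open>Rouch\'e's theorem for \<open>(E C)' = E' C + E C'\<close> against \<open>E' C\<close>, whose zeros in the disc are those of \<open>C\<close>.\<close>
lemma sum_order_pderiv_mult_prod_linear_ball:
  fixes E :: "complex poly" and \<xi> :: "'i \<Rightarrow> complex"
  assumes "finite I" "r > 0" "real (card I) < L * r"
    and E: "\<And>z. z \<in> cball c (2 * r) \<Longrightarrow> poly E z \<noteq> 0 \<and> L * norm (poly E z) \<le> norm (poly (pderiv E) z)"
    and circle: "\<And>z i. norm (z - c) = 2 * r \<Longrightarrow> i \<in> I \<Longrightarrow> r \<le> dist z (\<xi> i)"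
  shows "(\<Sum>z\<in>{z\<in>ball c (2 * r). poly (pderiv (E * (\<Prod>i\<in>I. [:- \<xi> i, 1:]))) z = 0}.
            order z (pderiv (E * (\<Prod>i\<in>I. [:- \<xi> i, 1:]))))
       = card {i\<in>I. \<xi> i \<in> ball c (2 * r)}"
proof -
  define C where "C = (\<Prod>i\<in>I. [:- \<xi> i, 1:])"
  define f where "f = pderiv E * C"
  define g where "g = E * pderiv C"
  have fg: "pderiv (E * C) = f + g" unfolding f_def g_def by (simp add: pderiv_mult algebra_simps)
  have "0 < L * r" using assms(3) by (metis of_nat_0_le_iff le_less_trans)
  then have "L > 0" using assms(2) by (simp add: zero_less_mult_iff)
  have E': "poly (pderiv E) z \<noteq> 0" if "z \<in> cball c (2 * r)" for z
  proof -
    have "0 < L * norm (poly E z)" using E[OF that] \<open>L > 0\<close> by simp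
    then show ?thesis using E[OF that] by auto
  qed
  have less: "norm (poly g z) < norm (poly f z)" if "norm (z - c) = 2 * r" for z
  proof -
    have "z \<in> cball c (2 * r)" using that by (simp add: dist_norm norm_minus_commute)
    then show ?thesis unfolding f_def g_def C_def
      using circle[OF that] E by (intro norm_poly_mult_pderiv_prod_linear_less[OF assms(1-3)]) auto
  qed
  define z0 where "z0 = c + of_real (2 * r)"
  have "norm (z0 - c) = 2 * r" using assms(2) by (simp add: z0_def)
  then have "norm (poly g z0) < norm (poly f z0)" by (rule less)
  then have "f \<noteq> 0" "f + g \<noteq> 0" by (auto simp: add_eq_0_iff)
  then have "(\<Sum>z\<in>{z\<in>ball c (2 * r). poly (pderiv (E * C)) z = 0}. order z (pderiv (E * C)))
      = (\<Sum>z\<in>{z\<in>ball c (2 * r). poly f z = 0}. order z f)"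
    unfolding fg using assms(2) less by (intro Rouche_poly_ball) auto
  also have "\<dots> = card {i\<in>I. \<xi> i \<in> ball c (2 * r)}"
    unfolding f_def C_def using E' by (intro sum_order_mult_prod_linear[OF assms(1)]) auto
  finally show ?thesis unfolding C_def .
qed

lemma critical_points_track_roots:
  fixes E :: "complex poly" and \<xi> :: "'i::wellorder \<Rightarrow> complex" and U W :: "complex set"
  assumes finI: "finite I" and "W \<subseteq> U"
    and outside_W: "\<And>z. z \<in> U \<Longrightarrow> z \<notin> W \<Longrightarrow> poly (pderiv (E * (\<Prod>i\<in>I. [:- \<xi> i, 1:]))) z \<noteq> 0"
    and E_W: "\<And>z. z \<in> W \<Longrightarrow> poly E z \<noteq> 0 \<and> L * norm (poly E z) \<le> norm (poly (pderiv E) z)"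
    and balls: "\<And>i. i \<in> I \<Longrightarrow> cball (\<xi> i) (2 * r) \<subseteq> W"
    and gap: "\<forall>i\<in>I. \<forall>j\<in>I. dist (\<xi> i) (\<xi> j) < r \<or> dist (\<xi> i) (\<xi> j) \<ge> 4 * r"
    and r: "r > 0" "real (card I) < L * r" "3 * r \<le> \<delta>"
  shows "\<exists>w. (\<forall>i\<in>I. w i \<in> U)
           \<and> (\<forall>z\<in>U. count (image_mset w (mset_set I)) z = order z (pderiv (E * (\<Prod>i\<in>I. [:- \<xi> i, 1:]))))
           \<and> (\<forall>i\<in>I. norm (w i - \<xi> i) < \<delta>)"
proof -
  define C where "C = (\<Prod>i\<in>I. [:- \<xi> i, 1:])"
  define P' where "P' = pderiv (E * C)"
  have far_nonzero: "poly P' z \<noteq> 0" if "z \<in> W" "\<forall>i\<in>I. r \<le> dist z (\<xi> i)" for z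
  proof -
    have "norm (poly (E * pderiv C) z) < norm (poly (pderiv E * C) z)"
      unfolding C_def using that E_W[OF that(1)] by (intro norm_poly_mult_pderiv_prod_linear_less[OF finI r(1,2)]) auto
    moreover have "P' = pderiv E * C + E * pderiv C"
      unfolding P'_def by (simp add: pderiv_mult algebra_simps)
    ultimately show ?thesis using add_neq_0_if_norm_less by (simp only: poly_add)
  qed
  obtain cen where c1: "\<forall>l\<in>I. cen l \<in> \<xi> ` I \<and> dist (cen l) (\<xi> l) < r"
    and c2: "\<forall>l\<in>I. \<forall>l'\<in>I. cen l \<noteq> cen l' \<longrightarrow> dist (cen l) (cen l') \<ge> 4 * r"
    and c3: "\<forall>i\<in>I. \<forall>l\<in>I. dist (\<xi> i) (cen l) < 2 * r \<longrightarrow> cen i = cen l"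
    using exists_cluster_centres[OF finI r(1) gap] by blast
  have circle: "r \<le> dist z (\<xi> i)" if "l \<in> I" "norm (z - cen l) = 2 * r" "i \<in> I" for l z i
    using dist_ge_on_cluster_circle[of I cen \<xi> r l z i] c1 c2 that by (simp add: dist_norm)
  have cen_cball: "cball (cen l) (2 * r) \<subseteq> W" if "l \<in> I" for l
  proof -
    have "cen l \<in> \<xi> ` I" using c1 that by simp
    then obtain i where "i \<in> I" "cen l = \<xi> i" by (rule imageE) simp
    then show ?thesis using balls by simp
  qed
  have near_centre: "\<exists>l\<in>I. dist z (cen l) < 2 * r" if "z \<in> U" "poly P' z = 0" for z
  proof (rule ccontr)
    assume "\<not> (\<exists>l\<in>I. dist z (cen l) < 2 * r)"
    then have "\<forall>i\<in>I. r \<le> dist z (\<xi> i)" using dist_ge_off_cluster_discs[of I cen \<xi> r z] c1 by (simp add: not_less)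
    moreover have "z \<in> W" using outside_W that unfolding P'_def C_def by blast
    ultimately show False using far_nonzero that(2) by blast
  qed
  define Z where "Z = {z\<in>U. poly P' z = 0}"
  have cluster_count: "(\<Sum>z\<in>{z\<in>Z. dist z (cen l) < 2 * r}. order z P') = card {i\<in>I. cen i = cen l}"
    if l: "l \<in> I" for l
  proof -
    have "\<xi> i \<in> ball (cen l) (2 * r) \<longleftrightarrow> cen i = cen l" if "i \<in> I" for i
      using c1 c3 that l r(1) by (fastforce simp: dist_commute)
    then have "{i\<in>I. \<xi> i \<in> ball (cen l) (2 * r)} = {i\<in>I. cen i = cen l}" by blast
    moreover have "z \<in> U" if "dist z (cen l) < 2 * r" for z
    proof -
      have "z \<in> cball (cen l) (2 * r)" using that by (simp add: dist_commute)
      then show ?thesis using cen_cball[OF l] \<open>W \<subseteq> U\<close> by blast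
    qed
    then have "{z\<in>Z. dist z (cen l) < 2 * r} = {z\<in>ball (cen l) (2 * r). poly P' z = 0}"
      by (auto simp: Z_def dist_commute)
    moreover have "(\<Sum>z\<in>{z\<in>ball (cen l) (2 * r). poly P' z = 0}. order z P')
        = card {i\<in>I. \<xi> i \<in> ball (cen l) (2 * r)}"
      unfolding P'_def C_def
      by (rule sum_order_pderiv_mult_prod_linear_ball[OF finI r(1,2) E_W[OF subsetD[OF cen_cball[OF l]]] circle[OF l]])
    ultimately show ?thesis by simp
  qed
  have "finite Z"
  proof (cases "I = {}")
    case True
    have "Z = {}"
    proof (rule equals0I)
      fix z assume "z \<in> Z"
      then show False using near_centre[of z] True by (simp add: Z_def)
    qed
    then show ?thesis by simp
  next
    case False
    then obtain l where l: "l \<in> I" by auto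
    define z0 where "z0 = cen l + of_real (2 * r)"
    have "norm (z0 - cen l) = 2 * r" using r(1) by (simp add: z0_def)
    then have "poly P' z0 \<noteq> 0"
      using cen_cball[OF l] circle[OF l] by (intro far_nonzero) (auto simp: dist_norm norm_minus_commute)
    then have "P' \<noteq> 0" by auto
    then show ?thesis unfolding Z_def by (rule finite_subset[rotated, OF poly_roots_finite]) auto
  qed
  moreover have "\<exists>l\<in>I. dist z (cen l) < 2 * r" if "z \<in> Z" for z
    using near_centre that by (simp add: Z_def)
  moreover have "2 * (2 * r) \<le> dist (cen l) (cen l')" if "l \<in> I" "l' \<in> I" "cen l \<noteq> cen l'" for l l'
    using c2 that by simp
  ultimately obtain w where w_count: "\<forall>z. count (image_mset w (mset_set I)) z = (if z \<in> Z then order z P' else 0)"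
    and w_Z: "\<forall>i\<in>I. w i \<in> Z \<and> dist (w i) (cen i) < 2 * r"
    using exists_enumeration_near_centres[OF finI _ _ _ cluster_count] by blast
  have "count (image_mset w (mset_set I)) z = order z P'" if "z \<in> U" for z
    using w_count that order_0I[of P' z] by (auto simp: Z_def)
  moreover have "norm (w i - \<xi> i) < \<delta>" if "i \<in> I" for i
  proof -
    have "dist (w i) (cen i) < 2 * r" "dist (cen i) (\<xi> i) < r" using w_Z c1 that by auto
    then show ?thesis using r(3) dist_triangle[of "w i" "\<xi> i" "cen i"] by (simp add: dist_norm)
  qed
  ultimately show ?thesis using w_Z unfolding Z_def P'_def C_def by blast
qed

section \<open>The deterministic limit theorem\<close>

text \<open>The samples are replaced by any sequence \<open>x\<close> in \<open>T\<close> whose Cauchy sums grow linearly away from \<open>T\<close>.\<close>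
context
  fixes T :: "complex set" and x :: "nat \<Rightarrow> complex" and \<xi> :: "nat \<Rightarrow> nat \<Rightarrow> complex"
    and k :: "nat \<Rightarrow> nat" and K s :: nat and B R c \<epsilon> :: real
  assumes x_in_T: "\<And>j. x j \<in> T"
    and x_bound: "\<And>j. 2 * norm (x j) < R"
    and xi_bound: "\<And>n l. l \<in> {1..k n} \<Longrightarrow> norm (\<xi> n l) \<le> B"
    and R: "2 * B < R" "B + \<epsilon> \<le> R"
    and k_bound: "\<And>n. k n \<le> K"
    and eps_pos: "\<epsilon> > 0"
    and c_pos: "c > 0"
    and sum_lower: "eventually (\<lambda>N. \<forall>z. 2 * \<epsilon> \<le> infdist z T \<and> norm z \<le> R \<longrightarrow>
                      real N * c \<le> norm (\<Sum>j<N. 1 / (z - x j))) sequentially"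
    and xi_loc: "eventually (\<lambda>n. s \<le> k n \<and> (\<forall>l\<in>{1..s}. 3 * \<epsilon> \<le> infdist (\<xi> n l) T)
                      \<and> (\<forall>l\<in>{s+1..k n}. infdist (\<xi> n l) T < \<epsilon>)) sequentially"
begin

lemma poly_pderiv_nonzero_outside_radius:
  assumes "1 \<le> n" "k n \<le> n" "R < norm z"
  shows "poly (pderiv ((\<Prod>j<n - k n. [:- x j, 1:]) * (\<Prod>l\<in>{1..k n}. [:- \<xi> n l, 1:]))) z \<noteq> 0"
proof -
  define a where "a = case_sum x (\<xi> n)"
  define I where "I = {..<n - k n} <+> {1..k n}"
  have p: "(\<Prod>j<n - k n. [:- x j, 1:]) * (\<Prod>l\<in>{1..k n}. [:- \<xi> n l, 1:]) = (\<Prod>i\<in>I. [:- a i, 1:])"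
    by (simp add: I_def a_def prod.Plus comp_def)
  have "I \<noteq> {}" using assms(1,2) by (cases "n - k n") (auto simp: I_def)
  moreover have "\<forall>i\<in>I. norm (a i) \<le> R / 2"
  proof
    fix i assume "i \<in> I"
    then show "norm (a i) \<le> R / 2"
    proof (cases i)
      case (Inl j)
      then show ?thesis using x_bound[of j] by (simp add: a_def)
    next
      case (Inr l)
      then show ?thesis using \<open>i \<in> I\<close> xi_bound[of l n] R(1) by (auto simp: a_def I_def)
    qed
  qed
  ultimately show ?thesis
    unfolding p using assms(3) by (intro poly_pderiv_prod_linear_nonzero_far[where \<rho>="R / 2"]) (auto simp: I_def)
qed

abbreviation bulk_factor :: "nat \<Rightarrow> complex poly" where
  "bulk_factor n \<equiv> (\<Prod>j<n - k n. [:- x j, 1:]) * (\<Prod>l\<in>{s+1..k n}. [:- \<xi> n l, 1:])"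

lemma bulk_factor_logderiv:
  assumes z: "2 * \<epsilon> \<le> infdist z T" and near: "\<forall>l\<in>{s+1..k n}. infdist (\<xi> n l) T < \<epsilon>"
  shows "poly (bulk_factor n) z \<noteq> 0"
    and "poly (pderiv (bulk_factor n)) z
           = poly (bulk_factor n) z * ((\<Sum>j<n - k n. 1 / (z - x j)) + (\<Sum>l\<in>{s+1..k n}. 1 / (z - \<xi> n l)))"
    and "norm (\<Sum>l\<in>{s+1..k n}. 1 / (z - \<xi> n l)) \<le> real K / \<epsilon>"
proof -
  have far_x: "\<forall>j\<in>{..<n - k n}. z \<noteq> x j"
  proof (intro ballI notI)
    fix j assume "z = x j"
    then have "infdist z T = 0" using x_in_T by simp
    then show False using z eps_pos by simp
  qed
  have far_xi: "\<forall>l\<in>{s+1..k n}. \<epsilon> \<le> norm (z - \<xi> n l)"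
  proof
    fix l assume "l \<in> {s+1..k n}"
    then have "infdist (\<xi> n l) T < \<epsilon>" using near by blast
    then show "\<epsilon> \<le> norm (z - \<xi> n l)"
      using z infdist_triangle[of z T "\<xi> n l"] by (simp add: dist_norm)
  qed
  then have ne_xi: "\<forall>l\<in>{s+1..k n}. z \<noteq> \<xi> n l" using eps_pos by auto
  show "poly (bulk_factor n) z \<noteq> 0" using far_x ne_xi by (simp add: poly_prod)
  show "poly (pderiv (bulk_factor n)) z
      = poly (bulk_factor n) z * ((\<Sum>j<n - k n. 1 / (z - x j)) + (\<Sum>l\<in>{s+1..k n}. 1 / (z - \<xi> n l)))"
    by (rule poly_pderiv_mult_logderiv[OF poly_pderiv_prod_linear[OF finite_lessThan far_x]
          poly_pderiv_prod_linear[OF finite_atLeastAtMost ne_xi]])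
  have "norm (\<Sum>l\<in>{s+1..k n}. 1 / (z - \<xi> n l)) \<le> real (card {s+1..k n}) / \<epsilon>"
    using eps_pos far_xi by (rule norm_sum_inverse_diff_le)
  also have "\<dots> \<le> real K / \<epsilon>" using k_bound[of n] eps_pos by (intro divide_right_mono) auto
  finally show "norm (\<Sum>l\<in>{s+1..k n}. 1 / (z - \<xi> n l)) \<le> real K / \<epsilon>" .
qed

lemma eventually_bulk_factor_logderiv_large:
  "eventually (\<lambda>n. \<forall>z. 2 * \<epsilon> \<le> infdist z T \<and> norm z \<le> R \<longrightarrow> poly (bulk_factor n) z \<noteq> 0
      \<and> real n * c / 2 * norm (poly (bulk_factor n) z) \<le> norm (poly (pderiv (bulk_factor n)) z)) sequentially"
proof -
  obtain N0 where N0: "\<And>N z. N \<ge> N0 \<Longrightarrow> 2 * \<epsilon> \<le> infdist z T \<Longrightarrow> norm z \<le> R \<Longrightarrow>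
        real N * c \<le> norm (\<Sum>j<N. 1 / (z - x j))"
    using sum_lower unfolding eventually_sequentially by auto
  have "eventually (\<lambda>n. 2 * real K + 2 * real K / (\<epsilon> * c) \<le> real n) sequentially"
    using eventually_ge_at_top[of "nat \<lceil>2 * real K + 2 * real K / (\<epsilon> * c)\<rceil>"]
    by eventually_elim linarith
  moreover have "eventually (\<lambda>n. N0 + K \<le> n) sequentially" by (rule eventually_ge_at_top)
  ultimately show ?thesis using xi_loc
  proof eventually_elim
    case (elim n)
    show ?case
    proof (intro allI impI)
      fix z assume z: "2 * \<epsilon> \<le> infdist z T \<and> norm z \<le> R"
      define S1 where "S1 = (\<Sum>j<n - k n. 1 / (z - x j))"
      define S2 where "S2 = (\<Sum>l\<in>{s+1..k n}. 1 / (z - \<xi> n l))"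
      note logderiv = bulk_factor_logderiv[of z n, folded S1_def S2_def]
      have "real (n - k n) * c \<le> norm S1"
        unfolding S1_def using elim k_bound[of n] z by (intro N0) auto
      moreover have "(real n - real K) * c \<le> real (n - k n) * c"
        using k_bound[of n] c_pos by (intro mult_right_mono) auto
      moreover have "norm S2 \<le> real K / \<epsilon>" using logderiv(3) elim z by blast
      moreover have "real K * c + real K / \<epsilon> \<le> real n * c / 2"
        using elim c_pos eps_pos by (simp add: field_simps)
      moreover have "(real n - real K) * c = real n * c - real K * c" by (simp add: algebra_simps)
      ultimately have "real n * c / 2 \<le> norm (S1 + S2)"
        using norm_diff_ineq[of S1 S2] by linarith
      then have "real n * c / 2 * norm (poly (bulk_factor n) z) \<le> norm (S1 + S2) * norm (poly (bulk_factor n) z)"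
        by (intro mult_right_mono) auto
      also have "\<dots> = norm (poly (pderiv (bulk_factor n)) z)"
        using logderiv(2) elim z by (simp add: norm_mult mult.commute)
      finally show "poly (bulk_factor n) z \<noteq> 0
          \<and> real n * c / 2 * norm (poly (bulk_factor n) z) \<le> norm (poly (pderiv (bulk_factor n)) z)"
        using logderiv(1) elim z by blast
    qed
  qed
qed

lemma prod_linear_factors_split_outliers:
  assumes "s \<le> k n"
  shows "(\<Prod>j<n - k n. [:- x j, 1:]) * (\<Prod>l\<in>{1..k n}. [:- \<xi> n l, 1:])
       = bulk_factor n * (\<Prod>l\<in>{1..s}. [:- \<xi> n l, 1:])"
proof -
  have "{1..k n} = {1..s} \<union> {s+1..k n}" "{1..s} \<inter> {s+1..k n} = {}" using assms by auto
  then show ?thesis by (simp add: prod.union_disjoint algebra_simps)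
qed

lemma cball_around_outlier_subset:
  assumes "l \<in> {1..s}" "s \<le> k n" "3 * \<epsilon> \<le> infdist (\<xi> n l) T" "2 * r \<le> \<epsilon>"
  shows "cball (\<xi> n l) (2 * r) \<subseteq> {z. 2 * \<epsilon> \<le> infdist z T \<and> norm z \<le> R}"
proof
  fix z assume "z \<in> cball (\<xi> n l) (2 * r)"
  then have d: "dist (\<xi> n l) z \<le> \<epsilon>" using assms(4) by simp
  then have "2 * \<epsilon> \<le> infdist z T"
    using assms(3) infdist_triangle[of "\<xi> n l" T z] by linarith
  moreover have "norm z \<le> R"
    using xi_bound[of l n] assms(1,2) d R(2) norm_triangle_sub[of z "\<xi> n l"]
    by (auto simp: dist_norm norm_minus_commute)
  ultimately show "z \<in> {z. 2 * \<epsilon> \<le> infdist z T \<and> norm z \<le> R}" by simp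
qed

lemma eventually_critical_points_near_outliers:
  assumes "\<delta> > 0"
  shows "eventually (\<lambda>n. \<exists>w. ((\<forall>l\<in>{1..s}. 2 * \<epsilon> \<le> infdist (w l) T)
      \<and> (\<forall>z. 2 * \<epsilon> \<le> infdist z T \<longrightarrow> count (image_mset w (mset_set {1..s})) z
             = order z (pderiv ((\<Prod>j<n - k n. [:- x j, 1:]) * (\<Prod>l\<in>{1..k n}. [:- \<xi> n l, 1:])))))
      \<and> (\<Sum>l\<in>{1..s}. norm (w l - \<xi> n l)) < \<delta>) sequentially"
proof -
  define \<delta>' where "\<delta>' = \<delta> / (real s + 1)"
  define \<rho> where "\<rho> = min \<delta>' \<epsilon>"
  define r0 where "r0 = \<rho> / 4 ^ (s * s + 1)"
  have "\<delta>' > 0" using assms by (simp add: \<delta>'_def)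
  then have "\<rho> > 0" using eps_pos by (simp add: \<rho>_def)
  then have r0_pos: "r0 > 0" by (simp add: r0_def)
  have "eventually (\<lambda>n. 2 * real s / (c * r0) < real n) sequentially"
    using eventually_gt_at_top[of "nat \<lceil>2 * real s / (c * r0)\<rceil>"] by eventually_elim linarith
  moreover have "eventually (\<lambda>n. K + 1 \<le> n) sequentially" by (rule eventually_ge_at_top)
  ultimately show ?thesis using eventually_bulk_factor_logderiv_large xi_loc
  proof eventually_elim
    case (elim n)
    then have bulk: "\<And>z. 2 * \<epsilon> \<le> infdist z T \<Longrightarrow> norm z \<le> R \<Longrightarrow> poly (bulk_factor n) z \<noteq> 0
        \<and> real n * c / 2 * norm (poly (bulk_factor n) z) \<le> norm (poly (pderiv (bulk_factor n)) z)"
      and sk: "s \<le> k n" and far: "\<forall>l\<in>{1..s}. 3 * \<epsilon> \<le> infdist (\<xi> n l) T" by auto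
    have n: "1 \<le> n" "k n \<le> n" using elim(2) k_bound[of n] by linarith+
    obtain r where r0_le: "r0 \<le> r" and r_le: "r \<le> \<rho> / 4"
      and gap: "\<forall>i\<in>{1..s}. \<forall>j\<in>{1..s}. dist (\<xi> n i) (\<xi> n j) < r \<or> dist (\<xi> n i) (\<xi> n j) \<ge> 4 * r"
      using exists_separating_scale[of "{1..s}" s \<rho> "\<xi> n"] \<open>\<rho> > 0\<close> unfolding r0_def by auto
    have r: "r > 0" "3 * r \<le> \<delta>'" "2 * r \<le> \<epsilon>" using r0_le r_le r0_pos unfolding \<rho>_def by auto
    \<comment> \<open>the scale \<open>r\<close> is bounded below independently of \<open>n\<close>, so \<open>E\<^sub>n'/E\<^sub>n\<close> eventually beats \<open>s/r\<close>\<close>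
    have "real s < real n * c / 2 * r0"
      using elim(1) c_pos r0_pos by (simp add: field_simps)
    also have "\<dots> \<le> real n * c / 2 * r" using r0_le c_pos by (intro mult_left_mono) auto
    finally have card_lt: "real (card {1..s}) < real n * c / 2 * r" by simp
    define U where "U = {z. 2 * \<epsilon> \<le> infdist z T}"
    define W where "W = {z. 2 * \<epsilon> \<le> infdist z T \<and> norm z \<le> R}"
    note p_split = prod_linear_factors_split_outliers[OF sk]
    have balls: "cball (\<xi> n l) (2 * r) \<subseteq> W" if "l \<in> {1..s}" for l
      unfolding W_def using that far sk r(3) by (intro cball_around_outlier_subset) auto
    obtain w where w_U: "\<forall>l\<in>{1..s}. w l \<in> U"
      and w_count: "\<forall>z\<in>U. count (image_mset w (mset_set {1..s})) z
          = order z (pderiv (bulk_factor n * (\<Prod>l\<in>{1..s}. [:- \<xi> n l, 1:])))"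
      and w_near: "\<forall>l\<in>{1..s}. norm (w l - \<xi> n l) < \<delta>'"
    proof (atomize_elim, rule critical_points_track_roots[OF finite_atLeastAtMost _ _ _ balls gap r(1) card_lt r(2)])
      show "W \<subseteq> U" by (auto simp: W_def U_def)
      show "poly (pderiv (bulk_factor n * (\<Prod>l\<in>{1..s}. [:- \<xi> n l, 1:]))) z \<noteq> 0"
        if "z \<in> U" "z \<notin> W" for z
        using that poly_pderiv_nonzero_outside_radius[OF n, of z] unfolding p_split
        by (auto simp: U_def W_def)
      show "poly (bulk_factor n) z \<noteq> 0
          \<and> real n * c / 2 * norm (poly (bulk_factor n) z) \<le> norm (poly (pderiv (bulk_factor n)) z)"
        if "z \<in> W" for z
        using that bulk by (simp add: W_def)
    qed
    have "(\<Sum>l\<in>{1..s}. norm (w l - \<xi> n l)) \<le> real s * \<delta>'"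
      using w_near sum_mono[of "{1..s}" "\<lambda>l. norm (w l - \<xi> n l)" "\<lambda>_. \<delta>'"] by fastforce
    also have "\<dots> < \<delta>" using assms by (simp add: \<delta>'_def field_simps)
    finally show ?case
      using w_U w_count unfolding U_def p_split by blast
  qed
qed

theorem critical_points_converge_to_outliers:
  "\<exists>w. eventually (\<lambda>n. (\<forall>l\<in>{1..s}. 2 * \<epsilon> \<le> infdist (w n l) T)
         \<and> (\<forall>z. 2 * \<epsilon> \<le> infdist z T \<longrightarrow> count (image_mset (w n) (mset_set {1..s})) z
                = order z (pderiv ((\<Prod>j<n - k n. [:- x j, 1:]) * (\<Prod>l\<in>{1..k n}. [:- \<xi> n l, 1:]))))) sequentially
     \<and> (\<forall>\<delta>>0. eventually (\<lambda>n. \<forall>l\<in>{1..s}. norm (w n l - \<xi> n l) < \<delta>) sequentially)"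
proof -
  obtain w where w_crit: "eventually (\<lambda>n. (\<forall>l\<in>{1..s}. 2 * \<epsilon> \<le> infdist (w n l) T)
         \<and> (\<forall>z. 2 * \<epsilon> \<le> infdist z T \<longrightarrow> count (image_mset (w n) (mset_set {1..s})) z
                = order z (pderiv ((\<Prod>j<n - k n. [:- x j, 1:]) * (\<Prod>l\<in>{1..k n}. [:- \<xi> n l, 1:]))))) sequentially"
    and w_sum: "\<forall>\<delta>>0. eventually (\<lambda>n. (\<Sum>l\<in>{1..s}. norm (w n l - \<xi> n l)) < \<delta>) sequentially"
    using diagonal_eventually_choice[OF eventually_critical_points_near_outliers] by blast
  have "eventually (\<lambda>n. \<forall>l\<in>{1..s}. norm (w n l - \<xi> n l) < \<delta>) sequentially" if "\<delta> > 0" for \<delta>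
    using w_sum[rule_format, OF that]
  proof eventually_elim
    case (elim n)
    then show ?case
      using member_le_sum[of _ "{1..s}" "\<lambda>l. norm (w n l - \<xi> n l)"] by fastforce
  qed
  then show ?thesis using w_crit by blast
qed

end

section \<open>Empirical Cauchy transforms\<close>

lemma Hoeffding_iid_mean_deviation:
  fixes P :: "'w measure" and Y :: "nat \<Rightarrow> 'w \<Rightarrow> real"
  assumes P: "prob_space P"
    and Ym[measurable]: "\<And>j. Y j \<in> borel_measurable P"
    and ind: "prob_space.indep_vars P (\<lambda>_. borel) Y UNIV"
    and dist: "\<And>j. distr P borel (Y j) = distr P borel (Y 0)"
    and bd: "\<And>j \<omega>. \<bar>Y j \<omega>\<bar> \<le> b"
    and t: "t > 0" and N: "N > 0"
  shows "measure P {\<omega>\<in>space P. \<bar>(\<Sum>i\<in>{..<N}. Y i \<omega>) / real N - prob_space.expectation P (Y 0)\<bar> \<ge> t}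
          \<le> 2 * exp (- 2 * real N * t\<^sup>2 / ((b + 1) - (- (b + 1)))\<^sup>2)"
proof -
  interpret prob_space P by (rule P)
  interpret H: Hoeffding_ineq_iid P "{..<N}" Y "Y 0" "- (b + 1)" "b + 1" "expectation (Y 0)"
  proof unfold_locales
    show "finite {..<N}" by simp
    show "indep_vars (\<lambda>_. borel) Y {..<N}" by (rule indep_vars_subset[OF ind]) auto
    show "\<And>i. i \<in> {..<N} \<Longrightarrow> distr P borel (Y i) = distr P borel (Y 0)" by (rule dist)
    show "random_variable borel (Y 0)" by simp
    show "AE x in P. Y 0 x \<in> {- (b + 1)..b + 1}"
    proof (intro AE_I2)
      fix x show "Y 0 x \<in> {- (b + 1)..b + 1}" using bd[of 0 x] by (auto simp: abs_le_iff)
    qed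
  qed (rule reflexive)
  have "- (b + 1) < b + 1" using bd[of 0 undefined] by linarith
  from H.Hoeffding_ineq_abs_ge'[OF less_imp_le[OF t] this]
  show ?thesis using N by (simp only: card_lessThan lessThan_empty_iff)
qed

lemma AE_eventually_mean_deviation_less:
  fixes P :: "'w measure" and Y :: "nat \<Rightarrow> 'w \<Rightarrow> real"
  assumes P: "prob_space P"
    and Ym[measurable]: "\<And>j. Y j \<in> borel_measurable P"
    and ind: "prob_space.indep_vars P (\<lambda>_. borel) Y UNIV"
    and dist: "\<And>j. distr P borel (Y j) = distr P borel (Y 0)"
    and bd: "\<And>j \<omega>. \<bar>Y j \<omega>\<bar> \<le> b"
    and t: "t > 0"
  shows "AE \<omega> in P. eventually (\<lambda>N. \<bar>(\<Sum>i<N. Y i \<omega>) / real N - prob_space.expectation P (Y 0)\<bar> < t) sequentially"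
proof -
  interpret prob_space P by (rule P)
  define A where "A N = {\<omega>\<in>space P. \<bar>(\<Sum>i\<in>{..<N}. Y i \<omega>) / real N - expectation (Y 0)\<bar> \<ge> t}" for N
  define \<kappa> where "\<kappa> = 2 * t\<^sup>2 / ((b + 1) - (- (b + 1)))\<^sup>2"
  have [measurable]: "A N \<in> sets P" for N unfolding A_def by measurable
  have bnd: "measure P (A N) \<le> 2 * exp (- \<kappa>) ^ N" for N
  proof (cases "N = 0")
    case True
    have "measure P (A N) \<le> 1" by (rule prob_le_1)
    moreover have "2 * exp (- \<kappa>) ^ N = 2" using True by simp
    ultimately show ?thesis by linarith
  next
    case False
    have "measure P (A N) \<le> 2 * exp (- 2 * real N * t\<^sup>2 / ((b + 1) - (- (b + 1)))\<^sup>2)"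
      unfolding A_def using Hoeffding_iid_mean_deviation[OF P Ym ind dist bd t] False by simp
    also have "- 2 * real N * t\<^sup>2 / ((b + 1) - (- (b + 1)))\<^sup>2 = real N * (- \<kappa>)"
      unfolding \<kappa>_def by (simp add: field_simps)
    also have "exp (real N * (- \<kappa>)) = exp (- \<kappa>) ^ N" by (rule exp_of_nat_mult)
    finally show ?thesis .
  qed
  have "(b + 1) - (- (b + 1)) > 0" using bd[of 0 undefined] by linarith
  then have "exp (- \<kappa>) < 1" unfolding \<kappa>_def using t by simp
  then have "summable (\<lambda>N. 2 * exp (- \<kappa>) ^ N)" by (intro summable_mult summable_geometric) auto
  then have "summable (\<lambda>N. measure P (A N))"
    by (rule summable_comparison_test[rotated]) (use bnd in auto)
  then have "AE \<omega> in P. eventually (\<lambda>N. \<omega> \<in> space P - A N) sequentially"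
    by (intro borel_cantelli_AE1) (auto simp: emeasure_eq_measure)
  then show ?thesis
    by (rule AE_mp[OF _ AE_I2[OF impI]]) (auto elim: eventually_mono simp: A_def)
qed

lemma strong_law_bounded_iid:
  fixes P :: "'w measure" and Y :: "nat \<Rightarrow> 'w \<Rightarrow> real"
  assumes P: "prob_space P"
    and Ym: "\<And>j. Y j \<in> borel_measurable P"
    and ind: "prob_space.indep_vars P (\<lambda>_. borel) Y UNIV"
    and dist: "\<And>j. distr P borel (Y j) = distr P borel (Y 0)"
    and bd: "\<And>j \<omega>. \<bar>Y j \<omega>\<bar> \<le> b"
  shows "AE \<omega> in P. (\<lambda>N. (\<Sum>i<N. Y i \<omega>) / real N) \<longlonglongrightarrow> prob_space.expectation P (Y 0)"
proof -
  define E where "E = prob_space.expectation P (Y 0)"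
  have "AE \<omega> in P. \<forall>m::nat. eventually (\<lambda>N. \<bar>(\<Sum>i<N. Y i \<omega>) / real N - E\<bar> < 1 / (real m + 1)) sequentially"
    unfolding AE_all_countable E_def by (intro allI AE_eventually_mean_deviation_less[OF assms]) simp
  then show ?thesis
  proof (rule AE_mp[OF _ AE_I2[OF impI]])
    fix \<omega> assume H: "\<forall>m::nat. eventually (\<lambda>N. \<bar>(\<Sum>i<N. Y i \<omega>) / real N - E\<bar> < 1 / (real m + 1)) sequentially"
    show "(\<lambda>N. (\<Sum>i<N. Y i \<omega>) / real N) \<longlonglongrightarrow> prob_space.expectation P (Y 0)"
      unfolding E_def[symmetric] tendsto_iff
    proof (intro allI impI)
      fix e :: real assume "e > 0"
      then obtain m :: nat where "inverse (real (Suc m)) < e" using reals_Archimedean by blast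
      then have "1 / (real m + 1) < e" by (simp add: inverse_eq_divide add.commute)
      then show "eventually (\<lambda>N. dist ((\<Sum>i<N. Y i \<omega>) / real N) E < e) sequentially"
        using H[rule_format, of m] by (auto elim: eventually_mono simp: dist_real_def)
    qed
  qed
qed

lemma uniform_limit_from_dense_equilipschitz:
  fixes f :: "nat \<Rightarrow> 'a::metric_space \<Rightarrow> 'b::metric_space" and g :: "'a \<Rightarrow> 'b"
  assumes "compact K" "K \<subseteq> U"
    and dense: "\<And>z \<rho>. z \<in> K \<Longrightarrow> \<rho> > 0 \<Longrightarrow> \<exists>q\<in>D \<inter> U. dist q z < \<rho>"
    and lip_f: "\<And>N. L-lipschitz_on U (f N)" and lip_g: "L-lipschitz_on U g"
    and conv: "\<And>q. q \<in> D \<inter> U \<Longrightarrow> (\<lambda>N. f N q) \<longlonglongrightarrow> g q"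
  shows "uniform_limit K f g sequentially"
  unfolding uniform_limit_iff
proof (intro allI impI)
  fix \<eta> :: real assume "\<eta> > 0"
  have "L \<ge> 0" using lip_g by (rule lipschitz_on_nonneg)
  define \<rho> where "\<rho> = \<eta> / (3 * (L + 1))"
  have "\<rho> > 0" using \<open>\<eta> > 0\<close> \<open>L \<ge> 0\<close> by (simp add: \<rho>_def)
  have L\<rho>: "L * \<rho> < \<eta> / 3"
    using \<open>\<eta> > 0\<close> \<open>L \<ge> 0\<close> by (simp add: \<rho>_def field_simps)
  have cover: "K \<subseteq> (\<Union>q\<in>D \<inter> U. ball q \<rho>)"
  proof
    fix z assume "z \<in> K"
    then obtain q where "q \<in> D \<inter> U" "dist q z < \<rho>" using dense \<open>\<rho> > 0\<close> by blast
    then show "z \<in> (\<Union>q\<in>D \<inter> U. ball q \<rho>)" by auto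
  qed
  obtain C where C: "C \<subseteq> D \<inter> U" "finite C" "K \<subseteq> (\<Union>q\<in>C. ball q \<rho>)"
    using compactE_image[OF \<open>compact K\<close> _ cover] by blast
  have "eventually (\<lambda>N. \<forall>q\<in>C. dist (f N q) (g q) < \<eta> / 3) sequentially"
  proof (rule eventually_ball_finite[OF C(2)], rule ballI)
    fix q assume "q \<in> C"
    then have "(\<lambda>N. f N q) \<longlonglongrightarrow> g q" using C(1) conv by blast
    then show "eventually (\<lambda>N. dist (f N q) (g q) < \<eta> / 3) sequentially"
      using \<open>\<eta> > 0\<close> by (intro tendstoD) auto
  qed
  then show "eventually (\<lambda>N. \<forall>z\<in>K. dist (f N z) (g z) < \<eta>) sequentially"
  proof eventually_elim
    case (elim N)
    show ?case
    proof
      fix z assume "z \<in> K"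
      then obtain q where q: "q \<in> C" "dist q z < \<rho>" using C(3) by auto
      have zq: "z \<in> U" "q \<in> U" using \<open>z \<in> K\<close> \<open>K \<subseteq> U\<close> q(1) C(1) by auto
      have Ld: "L * dist z q \<le> L * \<rho>"
        using q(2) \<open>L \<ge> 0\<close> by (intro mult_left_mono) (auto simp: dist_commute)
      have "dist (f N z) (g z) \<le> dist (f N z) (f N q) + dist (f N q) (g q) + dist (g q) (g z)"
        using dist_triangle[of "f N z" "g z" "f N q"] dist_triangle[of "f N q" "g z" "g q"] by linarith
      also have "\<dots> \<le> L * dist z q + dist (f N q) (g q) + L * dist q z"
        using lipschitz_onD[OF lip_f[of N] zq] lipschitz_onD[OF lip_g zq(2,1)] by simp
      also have "\<dots> < \<eta>"
      proof -
        have "dist (f N q) (g q) < \<eta> / 3" using elim q(1) by blast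
        then show ?thesis using Ld L\<rho> by (simp add: dist_commute)
      qed
      finally show "dist (f N z) (g z) < \<eta>" .
    qed
  qed
qed

lemma infdist_bounded_below_on_compact:
  fixes K S :: "'a::heine_borel set"
  assumes "compact K" "closed S" "S \<noteq> {}" "K \<inter> S = {}"
  obtains e where "e > 0" "\<And>z. z \<in> K \<Longrightarrow> e \<le> infdist z S"
proof -
  obtain e where "e > 0" and e: "\<forall>z\<in>K. \<forall>y\<in>S. e \<le> dist z y"
    using separate_compact_closed[OF assms(1,2,4)] by blast
  have "e \<le> infdist z S" if "z \<in> K" for z
    unfolding infdist_def using assms(3) e that by (auto intro: cINF_greatest)
  then show ?thesis using \<open>e > 0\<close> that by blast
qed

lemma eventually_norm_sum_ge_of_uniform_limit:
  fixes f :: "nat \<Rightarrow> 'a \<Rightarrow> 'b::real_normed_field"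
  assumes "uniform_limit K (\<lambda>N z. (\<Sum>j<N. f j z) / of_nat N) g sequentially"
    and "\<And>z. z \<in> K \<Longrightarrow> c \<le> norm (g z)" "c > 0"
  shows "eventually (\<lambda>N. \<forall>z\<in>K. real N * (c / 2) \<le> norm (\<Sum>j<N. f j z)) sequentially"
proof -
  have "eventually (\<lambda>N. \<forall>z\<in>K. dist ((\<Sum>j<N. f j z) / of_nat N) (g z) < c / 2) sequentially"
    using assms(1) half_gt_zero[OF \<open>c > 0\<close>] unfolding uniform_limit_iff by blast
  then show ?thesis
  proof eventually_elim
    case (elim N)
    show ?case
    proof
      fix z assume "z \<in> K"
      show "real N * (c / 2) \<le> norm (\<Sum>j<N. f j z)"
      proof (cases "N = 0")
        case False
        define a where "a = (\<Sum>j<N. f j z) / of_nat N"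
        have "norm (g z - a) < c / 2"
          using elim \<open>z \<in> K\<close> by (simp add: a_def dist_norm norm_minus_commute)
        then have "c / 2 \<le> norm ((\<Sum>j<N. f j z) / of_nat N)"
          using assms(2)[OF \<open>z \<in> K\<close>] norm_triangle_ineq2[of "g z" a] by (simp add: a_def)
        then show ?thesis using False by (simp add: norm_divide field_simps)
      qed simp
    qed
  qed
qed

text \<open>For \<open>S = msupp \<mu>\<close> this equals \<open>1/(z - x)\<close> for \<open>\<mu>\<close>-almost every \<open>x\<close>, and it is bounded
  whenever \<open>z\<close> is away from \<open>S\<close>.\<close>
definition truncated_cauchy_kernel :: "complex set \<Rightarrow> complex \<Rightarrow> complex \<Rightarrow> complex" where
  "truncated_cauchy_kernel S z x = (if x \<in> S then 1 / (z - x) else 0)"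

lemma borel_measurable_truncated_cauchy_kernel:
  assumes "closed S"
  shows "truncated_cauchy_kernel S z \<in> borel_measurable borel"
proof -
  have [measurable]: "S \<in> sets borel" using assms by (rule borel_closed)
  show ?thesis unfolding truncated_cauchy_kernel_def by measurable
qed

lemma norm_truncated_cauchy_kernel_le:
  assumes "e \<le> infdist z S" "e > 0"
  shows "norm (truncated_cauchy_kernel S z x) \<le> 1 / e"
proof (cases "x \<in> S")
  case True
  have "e \<le> norm (z - x)" using infdist_le[OF True, of z] assms(1) by (simp add: dist_norm)
  then show ?thesis using True assms(2) by (simp add: truncated_cauchy_kernel_def norm_divide frac_le)
qed (use assms in \<open>simp add: truncated_cauchy_kernel_def\<close>)

lemma dist_truncated_cauchy_kernel_le:
  assumes "e \<le> infdist z S" "e \<le> infdist w S" "e > 0"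
  shows "dist (truncated_cauchy_kernel S z x) (truncated_cauchy_kernel S w x) \<le> 1 / e\<^sup>2 * dist z w"
proof (cases "x \<in> S")
  case True
  have ez: "e \<le> norm (z - x)" using infdist_le[OF True, of z] assms(1) by (simp add: dist_norm)
  have ew: "e \<le> norm (w - x)" using infdist_le[OF True, of w] assms(2) by (simp add: dist_norm)
  have "z - x \<noteq> 0" "w - x \<noteq> 0" using ez ew assms(3) by auto
  then have "truncated_cauchy_kernel S z x - truncated_cauchy_kernel S w x = (w - z) / ((z - x) * (w - x))"
    using True by (simp add: truncated_cauchy_kernel_def field_simps)
  then have "dist (truncated_cauchy_kernel S z x) (truncated_cauchy_kernel S w x)
      = norm (z - w) / (norm (z - x) * norm (w - x))"
    by (simp add: dist_norm norm_divide norm_mult norm_minus_commute)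
  also have "\<dots> \<le> norm (z - w) / (e * e)"
    using ez ew assms(3) by (intro divide_left_mono mult_mono mult_pos_pos) auto
  finally show ?thesis by (simp add: dist_norm power2_eq_square)
qed (simp add: truncated_cauchy_kernel_def)

lemma empirical_cauchy_transform_lipschitz:
  fixes x :: "nat \<Rightarrow> complex"
  assumes "\<And>j. x j \<in> S" "e > 0"
  shows "(1 / e\<^sup>2)-lipschitz_on {z. e \<le> infdist z S} (\<lambda>z. (\<Sum>j<N. 1 / (z - x j)) / of_nat N)"
proof (rule lipschitz_onI)
  fix z w assume zw: "z \<in> {z. e \<le> infdist z S}" "w \<in> {z. e \<le> infdist z S}"
  show "dist ((\<Sum>j<N. 1 / (z - x j)) / of_nat N) ((\<Sum>j<N. 1 / (w - x j)) / of_nat N) \<le> 1 / e\<^sup>2 * dist z w"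
  proof (cases "N = 0")
    case False
    have "(\<Sum>j<N. 1 / (z - x j)) / of_nat N - (\<Sum>j<N. 1 / (w - x j)) / of_nat N
        = (\<Sum>j<N. truncated_cauchy_kernel S z (x j) - truncated_cauchy_kernel S w (x j)) / of_nat N"
      using assms(1) by (simp add: truncated_cauchy_kernel_def sum_subtractf diff_divide_distrib)
    then have "dist ((\<Sum>j<N. 1 / (z - x j)) / of_nat N) ((\<Sum>j<N. 1 / (w - x j)) / of_nat N)
        \<le> (\<Sum>j<N. dist (truncated_cauchy_kernel S z (x j)) (truncated_cauchy_kernel S w (x j))) / real N"
      by (simp add: dist_norm norm_divide divide_right_mono norm_sum)
    also have "\<dots> \<le> (\<Sum>j<N. 1 / e\<^sup>2 * dist z w) / real N"
      using zw assms(2) by (intro divide_right_mono sum_mono dist_truncated_cauchy_kernel_le) auto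
    also have "\<dots> = 1 / e\<^sup>2 * dist z w" using False by simp
    finally show ?thesis .
  qed simp
qed simp


locale compactly_supported_prob =
  fixes \<mu> :: "complex measure"
  assumes mu_prob: "prob_space \<mu>" and mu_borel: "sets \<mu> = sets borel" and mu_cpt: "compact (msupp \<mu>)"
begin

lemma closed_msupp: "closed (msupp \<mu>)"
  using mu_cpt by (rule compact_imp_closed)

lemma AE_in_msupp: "AE x in \<mu>. x \<in> msupp \<mu>"
proof -
  define \<F> where "\<F> = {ball x r | x r. r > 0 \<and> emeasure \<mu> (ball x r) = 0}"
  obtain \<F>' where \<F>': "\<F>' \<subseteq> \<F>" "countable \<F>'" "\<Union>\<F>' = \<Union>\<F>"
    using Lindelof[of \<F>] by (auto simp: \<F>_def)
  have null: "\<Union>\<F>' \<in> null_sets \<mu>"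
  proof (rule null_sets_UN'[OF \<F>'(2), of id, simplified])
    fix B assume "B \<in> \<F>'"
    then obtain x r where "B = ball x r" "emeasure \<mu> (ball x r) = 0" using \<F>'(1) by (auto simp: \<F>_def)
    then show "B \<in> null_sets \<mu>" using mu_borel by (simp add: null_sets_def)
  qed
  have sub: "- msupp \<mu> \<subseteq> \<Union>\<F>'"
  proof
    fix x assume "x \<in> - msupp \<mu>"
    then obtain r where "r > 0" "emeasure \<mu> (ball x r) = 0"
      unfolding msupp_def by (auto simp: zero_less_iff_neq_zero)
    then show "x \<in> \<Union>\<F>'" unfolding \<F>'(3) \<F>_def by force
  qed
  show ?thesis by (rule AE_I'[OF null]) (use sub in auto)
qed

lemma msupp_nonempty: "msupp \<mu> \<noteq> {}"
proof
  assume "msupp \<mu> = {}"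
  then have "AE x in \<mu>. False" using AE_in_msupp by simp
  then show False using prob_space.AE_False[OF mu_prob] by simp
qed

lemma integrable_truncated_cauchy_kernel:
  assumes "e \<le> infdist z (msupp \<mu>)" "e > 0"
  shows "integrable \<mu> (truncated_cauchy_kernel (msupp \<mu>) z)"
  by (rule finite_measure.integrable_const_bound[OF prob_space.finite_measure[OF mu_prob], of _ "1 / e"])
     (use assms in \<open>auto intro!: AE_I2 norm_truncated_cauchy_kernel_le
        borel_measurable_truncated_cauchy_kernel closed_msupp simp: measurable_cong_sets[OF mu_borel refl]\<close>)

lemma cauchy_transform_eq_integral_truncated:
  "cauchy_transform \<mu> z = integral\<^sup>L \<mu> (truncated_cauchy_kernel (msupp \<mu>) z)"
  unfolding cauchy_transform_def
  using AE_in_msupp by (intro integral_cong_AE) (auto simp: truncated_cauchy_kernel_def measurable_cong_sets[OF mu_borel refl]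
    intro: borel_measurable_truncated_cauchy_kernel closed_msupp)

lemma cauchy_transform_lipschitz:
  assumes "e > 0"
  shows "(1 / e\<^sup>2)-lipschitz_on {z. e \<le> infdist z (msupp \<mu>)} (cauchy_transform \<mu>)"
proof (rule lipschitz_onI)
  fix z w assume zw: "z \<in> {z. e \<le> infdist z (msupp \<mu>)}" "w \<in> {z. e \<le> infdist z (msupp \<mu>)}"
  let ?k = "truncated_cauchy_kernel (msupp \<mu>)"
  have int: "integrable \<mu> (?k z)" "integrable \<mu> (?k w)"
    using zw assms by (auto intro: integrable_truncated_cauchy_kernel)
  have pt: "norm (?k z x - ?k w x) \<le> 1 / e\<^sup>2 * norm (z - w)" for x
    using dist_truncated_cauchy_kernel_le[of e z _ w x] zw assms by (simp add: dist_norm)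
  have "dist (cauchy_transform \<mu> z) (cauchy_transform \<mu> w) = norm (integral\<^sup>L \<mu> (\<lambda>x. ?k z x - ?k w x))"
    unfolding cauchy_transform_eq_integral_truncated dist_norm by (simp add: int)
  also have "\<dots> \<le> integral\<^sup>L \<mu> (\<lambda>x. norm (?k z x - ?k w x))"
    by (rule integral_norm_bound)
  also have "\<dots> \<le> 1 / e\<^sup>2 * dist z w"
    using pt integrable_norm[OF Bochner_Integration.integrable_diff[OF int]]
    by (intro prob_space.integral_le_const[OF mu_prob] AE_I2) (auto simp: dist_norm)
  finally show "dist (cauchy_transform \<mu> z) (cauchy_transform \<mu> w) \<le> 1 / e\<^sup>2 * dist z w" .
qed simp

lemma cauchy_transform_bounded_below:
  assumes "compact K" "K \<inter> (msupp \<mu> \<union> Mzeros \<mu>) = {}"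
  obtains c where "c > 0" "\<And>z. z \<in> K \<Longrightarrow> c \<le> norm (cauchy_transform \<mu> z)"
proof (cases "K = {}")
  case False
  obtain e where "e > 0" and e: "\<And>z. z \<in> K \<Longrightarrow> e \<le> infdist z (msupp \<mu>)"
    using infdist_bounded_below_on_compact[OF assms(1) closed_msupp msupp_nonempty] assms(2) by blast
  have "continuous_on K (cauchy_transform \<mu>)"
    using cauchy_transform_lipschitz[OF \<open>e > 0\<close>] e
    by (intro lipschitz_on_continuous_on) (auto elim: lipschitz_on_subset)
  then obtain z0 where "z0 \<in> K" and z0: "\<And>z. z \<in> K \<Longrightarrow> norm (cauchy_transform \<mu> z0) \<le> norm (cauchy_transform \<mu> z)"
    using continuous_attains_inf[OF assms(1) False, of "\<lambda>z. norm (cauchy_transform \<mu> z)"]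
    by (auto intro: continuous_on_norm)
  have "cauchy_transform \<mu> z0 \<noteq> 0" using \<open>z0 \<in> K\<close> assms(2) by (auto simp: Mzeros_def)
  then have "0 < norm (cauchy_transform \<mu> z0)" by simp
  then show ?thesis using z0 by (rule that)
qed (use that in \<open>auto intro: zero_less_one\<close>)

end


locale iid_sample = compactly_supported_prob \<mu> for \<mu> +
  fixes P :: "'w measure" and X :: "nat \<Rightarrow> 'w \<Rightarrow> complex"
  assumes P_prob: "prob_space P"
    and X_rv[measurable]: "\<And>j. X j \<in> borel_measurable P"
    and X_indep: "prob_space.indep_vars P (\<lambda>_. borel) X UNIV"
    and X_distr: "\<And>j. distr P borel (X j) = \<mu>"
begin

lemma AE_samples_in_msupp: "AE \<omega> in P. \<forall>j. X j \<omega> \<in> msupp \<mu>"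
proof -
  have [measurable]: "msupp \<mu> \<in> sets borel" using closed_msupp by (rule borel_closed)
  have "AE \<omega> in P. X j \<omega> \<in> msupp \<mu>" for j
  proof -
    have "AE x in distr P borel (X j). x \<in> msupp \<mu>" unfolding X_distr by (rule AE_in_msupp)
    then show ?thesis by (subst (asm) AE_distr_iff) auto
  qed
  then show ?thesis unfolding AE_all_countable by blast
qed

lemma AE_empirical_mean_tendsto:
  fixes h :: "complex \<Rightarrow> real"
  assumes [measurable]: "h \<in> borel_measurable borel" and "\<And>y. \<bar>h y\<bar> \<le> b"
  shows "AE \<omega> in P. (\<lambda>N. (\<Sum>i<N. h (X i \<omega>)) / real N) \<longlonglongrightarrow> integral\<^sup>L \<mu> h"
proof -
  have "distr P borel (\<lambda>\<omega>. h (X j \<omega>)) = distr \<mu> borel h" for j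
    using distr_distr[of h borel borel "X j" P, symmetric] by (simp add: X_distr comp_def)
  moreover have "prob_space.indep_vars P (\<lambda>_. borel) (\<lambda>i \<omega>. h (X i \<omega>)) UNIV"
    using prob_space.indep_vars_compose2[OF P_prob X_indep, of "\<lambda>_. h" "\<lambda>_. borel"] by auto
  moreover have "prob_space.expectation P (\<lambda>\<omega>. h (X 0 \<omega>)) = integral\<^sup>L \<mu> h"
    using integral_distr[of "X 0" P borel h] by (simp add: X_distr)
  ultimately show ?thesis
    using strong_law_bounded_iid[OF P_prob, of "\<lambda>i \<omega>. h (X i \<omega>)" b] assms(2) by simp
qed

lemma AE_empirical_cauchy_transform_tendsto:
  assumes "q \<notin> msupp \<mu>"
  shows "AE \<omega> in P. (\<lambda>N. (\<Sum>j<N. truncated_cauchy_kernel (msupp \<mu>) q (X j \<omega>)) / of_nat N)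
                       \<longlonglongrightarrow> cauchy_transform \<mu> q"
proof -
  let ?k = "truncated_cauchy_kernel (msupp \<mu>) q"
  define e where "e = infdist q (msupp \<mu>)"
  have "e > 0" unfolding e_def
    using infdist_pos_not_in_closed[OF closed_msupp msupp_nonempty] assms by simp
  have [measurable]: "?k \<in> borel_measurable borel"
    by (rule borel_measurable_truncated_cauchy_kernel[OF closed_msupp])
  have bound: "norm (?k y) \<le> 1 / e" for y
    using \<open>e > 0\<close> by (intro norm_truncated_cauchy_kernel_le) (auto simp: e_def)
  have int: "integrable \<mu> ?k"
    using \<open>e > 0\<close> by (intro integrable_truncated_cauchy_kernel[of e]) (auto simp: e_def)
  have "AE \<omega> in P. (\<lambda>N. (\<Sum>i<N. Re (?k (X i \<omega>))) / real N) \<longlonglongrightarrow> integral\<^sup>L \<mu> (\<lambda>y. Re (?k y))"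
    using bound by (intro AE_empirical_mean_tendsto[of _ "1 / e"]) (auto intro: order_trans[OF abs_Re_le_cmod])
  moreover have "AE \<omega> in P. (\<lambda>N. (\<Sum>i<N. Im (?k (X i \<omega>))) / real N) \<longlonglongrightarrow> integral\<^sup>L \<mu> (\<lambda>y. Im (?k y))"
    using bound by (intro AE_empirical_mean_tendsto[of _ "1 / e"]) (auto intro: order_trans[OF abs_Im_le_cmod])
  ultimately show ?thesis
  proof eventually_elim
    case (elim \<omega>)
    then show ?case
      using int unfolding tendsto_complex_iff cauchy_transform_eq_integral_truncated
      by (simp add: Re_sum Im_sum)
  qed
qed

lemma AE_empirical_cauchy_transform_uniform_limit:
  "AE \<omega> in P. (\<forall>j. X j \<omega> \<in> msupp \<mu>) \<and> (\<forall>K. compact K \<longrightarrow> K \<inter> msupp \<mu> = {} \<longrightarrow>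
      uniform_limit K (\<lambda>N z. (\<Sum>j<N. 1 / (z - X j \<omega>)) / of_nat N) (cauchy_transform \<mu>) sequentially)"
proof -
  obtain D :: "complex set" where "countable D" and D: "\<And>A. open A \<Longrightarrow> A \<noteq> {} \<Longrightarrow> \<exists>d\<in>D. d \<in> A"
    by (erule countable_dense_setE)
  have "AE \<omega> in P. \<forall>q\<in>D. q \<notin> msupp \<mu> \<longrightarrow>
      (\<lambda>N. (\<Sum>j<N. truncated_cauchy_kernel (msupp \<mu>) q (X j \<omega>)) / of_nat N) \<longlonglongrightarrow> cauchy_transform \<mu> q"
    unfolding AE_ball_countable[OF \<open>countable D\<close>]
    using AE_empirical_cauchy_transform_tendsto by auto
  with AE_samples_in_msupp show ?thesis
  proof eventually_elim
    case (elim \<omega>)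
    then have in_supp: "\<And>j. X j \<omega> \<in> msupp \<mu>" and
      conv: "\<And>q. q \<in> D \<Longrightarrow> q \<notin> msupp \<mu> \<Longrightarrow>
        (\<lambda>N. (\<Sum>j<N. 1 / (q - X j \<omega>)) / of_nat N) \<longlonglongrightarrow> cauchy_transform \<mu> q"
      by (auto simp: truncated_cauchy_kernel_def)
    have "uniform_limit K (\<lambda>N z. (\<Sum>j<N. 1 / (z - X j \<omega>)) / of_nat N) (cauchy_transform \<mu>) sequentially"
      if K: "compact K" "K \<inter> msupp \<mu> = {}" for K
    proof -
      obtain e where "e > 0" and e: "\<And>z. z \<in> K \<Longrightarrow> e \<le> infdist z (msupp \<mu>)"
        using infdist_bounded_below_on_compact[OF K(1) closed_msupp msupp_nonempty K(2)] by blast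
      define U where "U = {z. e / 2 \<le> infdist z (msupp \<mu>)}"
      show ?thesis
      proof (rule uniform_limit_from_dense_equilipschitz[OF K(1), where U=U and D=D])
        show "K \<subseteq> U" using e \<open>e > 0\<close> by (force simp: U_def)
        show "\<exists>q\<in>D \<inter> U. dist q z < \<rho>" if z: "z \<in> K" "\<rho> > 0" for z \<rho>
        proof -
          obtain q where "q \<in> D" "q \<in> ball z (min \<rho> (e / 2))"
            using D[of "ball z (min \<rho> (e / 2))"] \<open>e > 0\<close> z(2) by fastforce
          moreover have "e / 2 \<le> infdist q (msupp \<mu>)"
            using calculation(2) e[OF z(1)] infdist_triangle[of z "msupp \<mu>" q] by (simp add: dist_commute)
          ultimately show ?thesis by (auto simp: U_def dist_commute)
        qed
        show "(1 / (e / 2)\<^sup>2)-lipschitz_on U (\<lambda>z. (\<Sum>j<N. 1 / (z - X j \<omega>)) / of_nat N)" for N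
          unfolding U_def using in_supp \<open>e > 0\<close> by (intro empirical_cauchy_transform_lipschitz) auto
        show "(1 / (e / 2)\<^sup>2)-lipschitz_on U (cauchy_transform \<mu>)"
          unfolding U_def using \<open>e > 0\<close> by (intro cauchy_transform_lipschitz) auto
        show "(\<lambda>N. (\<Sum>j<N. 1 / (q - X j \<omega>)) / of_nat N) \<longlonglongrightarrow> cauchy_transform \<mu> q" if "q \<in> D \<inter> U" for q
        proof -
          have "q \<notin> msupp \<mu>"
          proof
            assume "q \<in> msupp \<mu>"
            then have "infdist q (msupp \<mu>) = 0" by simp
            then show False using that \<open>e > 0\<close> by (simp add: U_def)
          qed
          then show ?thesis using that conv by blast
        qed
      qed
    qed
    then show ?case using in_supp by blast
  qed
qed


lemma AE_empirical_cauchy_sum_bounded_below: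
  assumes "\<epsilon> > 0"
  obtains c where "c > 0"
    "AE \<omega> in P. eventually (\<lambda>N. \<forall>z. 2 * \<epsilon> \<le> infdist z (msupp \<mu> \<union> Mzeros \<mu>) \<and> norm z \<le> R \<longrightarrow>
        real N * c \<le> norm (\<Sum>j<N. 1 / (z - X j \<omega>))) sequentially"
proof -
  define \<Omega> where "\<Omega> = {z. 2 * \<epsilon> \<le> infdist z (msupp \<mu> \<union> Mzeros \<mu>)} \<inter> cball 0 R"
  have "compact \<Omega>"
    unfolding \<Omega>_def by (intro closed_Int_compact compact_cball closed_Collect_le continuous_intros)
  moreover have "\<Omega> \<inter> (msupp \<mu> \<union> Mzeros \<mu>) = {}" using assms by (force simp: \<Omega>_def)
  ultimately obtain c where "c > 0" and c: "\<And>z. z \<in> \<Omega> \<Longrightarrow> c \<le> norm (cauchy_transform \<mu> z)"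
    using cauchy_transform_bounded_below by blast
  have "AE \<omega> in P. eventually (\<lambda>N. \<forall>z\<in>\<Omega>. real N * (c / 2) \<le> norm (\<Sum>j<N. 1 / (z - X j \<omega>))) sequentially"
    using AE_empirical_cauchy_transform_uniform_limit
  proof eventually_elim
    case (elim \<omega>)
    then have "uniform_limit \<Omega> (\<lambda>N z. (\<Sum>j<N. 1 / (z - X j \<omega>)) / of_nat N) (cauchy_transform \<mu>) sequentially"
      using \<open>compact \<Omega>\<close> \<open>\<Omega> \<inter> (msupp \<mu> \<union> Mzeros \<mu>) = {}\<close> by blast
    then show ?case using c \<open>c > 0\<close> by (rule eventually_norm_sum_ge_of_uniform_limit)
  qed
  then have "AE \<omega> in P. eventually (\<lambda>N. \<forall>z. 2 * \<epsilon> \<le> infdist z (msupp \<mu> \<union> Mzeros \<mu>) \<and> norm z \<le> R \<longrightarrow>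
      real N * (c / 2) \<le> norm (\<Sum>j<N. 1 / (z - X j \<omega>))) sequentially"
  proof eventually_elim
    case (elim \<omega>)
    then show ?case by eventually_elim (simp add: \<Omega>_def)
  qed
  then show ?thesis using \<open>c > 0\<close> by (intro that[of "c / 2"]) auto
qed

end

theorem mainTheorem5:
  fixes \<mu> :: "complex measure"
    and P :: "'w measure"
    and X :: "nat \<Rightarrow> 'w \<Rightarrow> complex"
    and \<xi> :: "nat \<Rightarrow> nat \<Rightarrow> complex"
    and k :: "nat \<Rightarrow> nat"
    and K :: nat and B :: real and \<epsilon> :: real and s :: nat
  assumes mu_prob: "prob_space \<mu>"
    and mu_borel: "sets \<mu> = sets borel"
    and mu_cpt: "compact (msupp \<mu>)"
    and P_prob: "prob_space P"
    and X_rv: "\<And>j. X j \<in> borel_measurable P"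
    and X_indep: "prob_space.indep_vars P (\<lambda>_. borel) X UNIV"
    and X_distr: "\<And>j. distr P borel (X j) = \<mu>"
    and k_bound: "\<And>n. k n \<le> K"
    and xi_bound: "\<And>n l. l \<in> {1..k n} \<Longrightarrow> norm (\<xi> n l) \<le> B"
    and eps_pos: "\<epsilon> > 0"
    and xi_loc: "eventually (\<lambda>n. s \<le> k n
        \<and> (\<forall>l\<in>{1..k n}. \<xi> n l \<notin> Nbhd \<mu> (3 * \<epsilon>) - Nbhd \<mu> \<epsilon>)
        \<and> (\<forall>l\<in>{1..s}. \<xi> n l \<notin> Nbhd \<mu> (3 * \<epsilon>))
        \<and> (\<forall>l\<in>{s+1..k n}. \<xi> n l \<in> Nbhd \<mu> \<epsilon>)) sequentially"
  shows "AE \<omega> in P.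
    (let p = (\<lambda>n. (\<Prod>j<n - k n. [:- X j \<omega>, 1:]) * (\<Prod>l\<in>{1..k n}. [:- \<xi> n l, 1:]))
     in \<exists>w :: nat \<Rightarrow> nat \<Rightarrow> complex.
          eventually (\<lambda>n. (\<forall>l\<in>{1..s}. w n l \<notin> Nbhd \<mu> (2 * \<epsilon>))
             \<and> (\<forall>z. z \<notin> Nbhd \<mu> (2 * \<epsilon>) \<longrightarrow>
                    count (image_mset (w n) (mset_set {1..s})) z = crit_mult (p n) z)) sequentially
        \<and> (\<forall>\<delta>>0. eventually (\<lambda>n. \<forall>l\<in>{1..s}. norm (w n l - \<xi> n l) < \<delta>) sequentially))"
proof -
  interpret iid_sample \<mu> P X
    using mu_prob mu_borel mu_cpt P_prob X_rv X_indep X_distr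
    by (simp add: iid_sample_def iid_sample_axioms_def compactly_supported_prob_def)
  define T where "T = msupp \<mu> \<union> Mzeros \<mu>"
  obtain \<rho> where \<rho>: "\<And>x. x \<in> msupp \<mu> \<Longrightarrow> norm x \<le> \<rho>"
    using compact_imp_bounded[OF mu_cpt] unfolding bounded_iff by blast
  define R where "R = 2 * \<bar>\<rho>\<bar> + 2 * \<bar>B\<bar> + \<epsilon> + 1"
  obtain c where "c > 0" and lower: "AE \<omega> in P. eventually (\<lambda>N. \<forall>z. 2 * \<epsilon> \<le> infdist z T \<and> norm z \<le> R \<longrightarrow>
      real N * c \<le> norm (\<Sum>j<N. 1 / (z - X j \<omega>))) sequentially"
    using AE_empirical_cauchy_sum_bounded_below[OF eps_pos] unfolding T_def by blast
  have xi_loc': "eventually (\<lambda>n. s \<le> k n \<and> (\<forall>l\<in>{1..s}. 3 * \<epsilon> \<le> infdist (\<xi> n l) T)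
      \<and> (\<forall>l\<in>{s+1..k n}. infdist (\<xi> n l) T < \<epsilon>)) sequentially"
    using xi_loc by eventually_elim (auto simp: Nbhd_def T_def not_less)
  have R: "2 * B < R" "B + \<epsilon> \<le> R" using eps_pos by (auto simp: R_def)
  show ?thesis
    using lower AE_samples_in_msupp
  proof eventually_elim
    case (elim \<omega>)
    have "X j \<omega> \<in> T" "2 * norm (X j \<omega>) < R" for j
      using elim(2) \<rho>[of "X j \<omega>"] eps_pos abs_ge_self[of \<rho>] abs_ge_zero[of B] by (auto simp: T_def R_def)
    then show ?case
      using critical_points_converge_to_outliers[OF _ _ xi_bound R k_bound eps_pos \<open>c > 0\<close> elim(1) xi_loc']
      unfolding Let_def Nbhd_def crit_mult_def T_def by (simp add: not_less)
  qed
qed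

end
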